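(* Let $G \ne K_4$ be a connected, claw-free, cubic graph of order $n$ with $u(G)$ units. Then $m(G,2) = u(G)+1$ if $G$ is a diamond-necklace $N_k$ for some $k\ge 2$, and $m(G,2) = u(G)$ otherwise.
   Context: A graph is claw-free if it has no induced subgraph isomorphic to $K_{1,3}$; it is cubic if every vertex has degree $3$. A diamond is an induced subgraph isomorphic to $K_4$ minus one edge. For a connected, claw-free, cubic graph $G\neq K_4$, the vertex set $V(G)$ can be uniquely partitioned into sets each of which induces a triangle or a diamond in $G$; the parts are called units, and $u(G)$ is the number of units. Diamond-necklace: for $k\ge 2$, take $k$ disjoint diamonds $D_1,\dots,D_k$ with $V(D_i)=\{a_i,b_i,c_i,d_i\}$ where $a_ib_i$ is the missing edge, and add the edges $a_ib_{i+1}$ for $i\in\{1,\dots,k-1\}$ and the edge $a_kb_1$; the result is $N_k$. $r$-percolation: starting from a set $S$ of infected vertices, repeatedly infect any uninfected vertex having at least $r$ infected neighbors. $S$ is an $r$-percolating set if eventually all vertices are infected; $m(G,r)$ is the minimum cardinality of an $r$-percolating set of $G$. *)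

theory Defs
  imports Main
begin

definition simple_graph :: "'a set \<Rightarrow> ('a \<Rightarrow> 'a \<Rightarrow> bool) \<Rightarrow> bool" where
  "simple_graph V E \<longleftrightarrow> finite V \<and> (\<forall>x y. E x y \<longrightarrow> x \<in> V \<and> y \<in> V)
     \<and> (\<forall>x y. E x y \<longrightarrow> E y x) \<and> (\<forall>x. \<not> E x x)"

definition graph_connected :: "'a set \<Rightarrow> ('a \<Rightarrow> 'a \<Rightarrow> bool) \<Rightarrow> bool" where
  "graph_connected V E \<longleftrightarrow> (\<forall>x\<in>V. \<forall>y\<in>V. E\<^sup>*\<^sup>* x y)"

definition cubic :: "'a set \<Rightarrow> ('a \<Rightarrow> 'a \<Rightarrow> bool) \<Rightarrow> bool" where
  "cubic V E \<longleftrightarrow> (\<forall>v\<in>V. card {w. E v w} = 3)"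

definition claw_free :: "'a set \<Rightarrow> ('a \<Rightarrow> 'a \<Rightarrow> bool) \<Rightarrow> bool" where
  "claw_free V E \<longleftrightarrow> \<not> (\<exists>x a b c. x \<in> V \<and> a \<in> V \<and> b \<in> V \<and> c \<in> V \<and>
      a \<noteq> b \<and> a \<noteq> c \<and> b \<noteq> c \<and> E x a \<and> E x b \<and> E x c \<and>
      \<not> E a b \<and> \<not> E a c \<and> \<not> E b c)"

definition is_K4 :: "'a set \<Rightarrow> ('a \<Rightarrow> 'a \<Rightarrow> bool) \<Rightarrow> bool" where
  "is_K4 V E \<longleftrightarrow> card V = 4 \<and> (\<forall>x\<in>V. \<forall>y\<in>V. x \<noteq> y \<longrightarrow> E x y)"

definition induces_triangle :: "('a \<Rightarrow> 'a \<Rightarrow> bool) \<Rightarrow> 'a set \<Rightarrow> bool" where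
  "induces_triangle E S \<longleftrightarrow> card S = 3 \<and> (\<forall>x\<in>S. \<forall>y\<in>S. x \<noteq> y \<longrightarrow> E x y)"

definition induces_diamond :: "('a \<Rightarrow> 'a \<Rightarrow> bool) \<Rightarrow> 'a set \<Rightarrow> bool" where
  "induces_diamond E S \<longleftrightarrow> (\<exists>a b c d. S = {a, b, c, d} \<and> card S = 4 \<and>
      \<not> E a b \<and> E a c \<and> E a d \<and> E b c \<and> E b d \<and> E c d)"

definition unit_partition :: "'a set \<Rightarrow> ('a \<Rightarrow> 'a \<Rightarrow> bool) \<Rightarrow> 'a set set \<Rightarrow> bool" where
  "unit_partition V E P \<longleftrightarrow> \<Union>P = V \<and>
      (\<forall>A\<in>P. \<forall>B\<in>P. A \<noteq> B \<longrightarrow> A \<inter> B = {}) \<and>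
      (\<forall>A\<in>P. induces_triangle E A \<or> induces_diamond E A)"

text \<open>u(G): number of units of the (unique) unit partition.\<close>
definition num_units :: "'a set \<Rightarrow> ('a \<Rightarrow> 'a \<Rightarrow> bool) \<Rightarrow> nat" where
  "num_units V E = card (THE P. unit_partition V E P)"

text \<open>Diamond-necklace N_k on vertices (i,j), i<k, j=0,1,2,3 standing for a_i,b_i,c_i,d_i
  (0-indexed diamonds); a_i b_{(i+1) mod k} are the connecting edges.\<close>
definition necklace_V :: "nat \<Rightarrow> (nat \<times> nat) set" where
  "necklace_V k = {(i, j). i < k \<and> j < 4}"

definition necklace_E :: "nat \<Rightarrow> nat \<times> nat \<Rightarrow> nat \<times> nat \<Rightarrow> bool" where
  "necklace_E k p q \<longleftrightarrow> p \<in> necklace_V k \<and> q \<in> necklace_V k \<and>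
     ((fst p = fst q \<and> snd p \<noteq> snd q \<and> {snd p, snd q} \<noteq> {0, 1}) \<or>
      (snd p = 0 \<and> snd q = 1 \<and> fst q = (fst p + 1) mod k) \<or>
      (snd q = 0 \<and> snd p = 1 \<and> fst p = (fst q + 1) mod k))"

definition graph_iso :: "'a set \<Rightarrow> ('a \<Rightarrow> 'a \<Rightarrow> bool) \<Rightarrow> 'b set \<Rightarrow> ('b \<Rightarrow> 'b \<Rightarrow> bool) \<Rightarrow> bool" where
  "graph_iso V E W F \<longleftrightarrow> (\<exists>f. bij_betw f V W \<and> (\<forall>x\<in>V. \<forall>y\<in>V. E x y \<longleftrightarrow> F (f x) (f y)))"

definition is_diamond_necklace :: "'a set \<Rightarrow> ('a \<Rightarrow> 'a \<Rightarrow> bool) \<Rightarrow> bool" where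
  "is_diamond_necklace V E \<longleftrightarrow> (\<exists>k\<ge>2. graph_iso V E (necklace_V k) (necklace_E k))"

inductive infected :: "'a set \<Rightarrow> ('a \<Rightarrow> 'a \<Rightarrow> bool) \<Rightarrow> nat \<Rightarrow> 'a set \<Rightarrow> 'a \<Rightarrow> bool"
  for V E r S where
  init: "x \<in> S \<Longrightarrow> infected V E r S x"
| step: "x \<in> V \<Longrightarrow> finite T \<Longrightarrow> card T \<ge> r \<Longrightarrow> (\<forall>y\<in>T. E x y \<and> infected V E r S y)
         \<Longrightarrow> infected V E r S x"

definition percolating :: "'a set \<Rightarrow> ('a \<Rightarrow> 'a \<Rightarrow> bool) \<Rightarrow> nat \<Rightarrow> 'a set \<Rightarrow> bool" where
  "percolating V E r S \<longleftrightarrow> S \<subseteq> V \<and> (\<forall>x\<in>V. infected V E r S x)"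

definition m_perc :: "'a set \<Rightarrow> ('a \<Rightarrow> 'a \<Rightarrow> bool) \<Rightarrow> nat \<Rightarrow> nat" where
  "m_perc V E r = (LEAST c. \<exists>S. percolating V E r S \<and> card S = c)"

end

theory Submission
  imports Defs
begin

(* Every unit must contain an initially infected vertex, because each vertex of a unit has at
   most one neighbour outside it; hence m(G,2) >= u(G).  Conversely, seed in every unit a hub, a
   vertex adjacent to all others of its unit, avoiding the vertex at which a breadth-first search
   from a start vertex q first enters the unit.  Infection then spreads unit by unit: the entry
   vertex has an infected predecessor and the infected hub as neighbours, and two infected
   vertices of a unit infect all of it.  Starting the search costs one extra seed, unless a
   triangle unit has an exit edge p q lying on a cycle: then the search runs in G - pq from q
   and p serves as the seed of its triangle.  Such an edge exists as soon as there is a triangle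
   unit, since the far side of a bridge leaving a triangle has odd order (its degree sum is
   3|C| - 1), so it contains another triangle with a strictly smaller far side.
   If all units are diamonds, then n = 4 u(G), and counting the edges leaving the infected set
   (every infection removes at least one, the last one three) gives 4|S| >= n + 2, so
   m(G,2) = u(G) + 1.  Finally, the connected claw-free cubic graphs all of whose units are
   diamonds are exactly the diamond necklaces: each diamond has two ends with one outer edge each,
   so the diamonds form a single cycle. *)


lemma card_4_iff_distinct: "card {a, b, c, d} = 4 \<longleftrightarrow> distinct [a, b, c, d]"
proof
  assume card4: "card {a, b, c, d} = 4"
  show "distinct [a, b, c, d]"
  proof (rule ccontr)
    assume "\<not> distinct [a, b, c, d]"
    then obtain x y z where "{a, b, c, d} = {x, y, z}"
      by (simp only: distinct.simps set_simps)
        (metis insert_commute insert_absorb insertI2)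
    moreover have "card {x, y, z} \<le> 3"
      by (simp add: card_insert_if)
    ultimately show False using card4 by simp
  qed
qed simp

definition triangle :: "('a \<Rightarrow> 'a \<Rightarrow> bool) \<Rightarrow> 'a \<Rightarrow> 'a \<Rightarrow> 'a \<Rightarrow> bool" where
  "triangle E x y z \<longleftrightarrow> distinct [x, y, z] \<and> E x y \<and> E x z \<and> E y z"

definition diamond :: "('a \<Rightarrow> 'a \<Rightarrow> bool) \<Rightarrow> 'a \<Rightarrow> 'a \<Rightarrow> 'a \<Rightarrow> 'a \<Rightarrow> bool" where
  "diamond E a b c d \<longleftrightarrow> distinct [a, b, c, d] \<and>
     \<not> E a b \<and> E a c \<and> E a d \<and> E b c \<and> E b d \<and> E c d"

lemma induces_diamond_iff: "induces_diamond E S \<longleftrightarrow> (\<exists>a b c d. S = {a, b, c, d} \<and> diamond E a b c d)"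
proof
  assume "induces_diamond E S"
  then obtain a b c d where "S = {a, b, c, d}" "card {a, b, c, d} = 4"
    "\<not> E a b" "E a c" "E a d" "E b c" "E b d" "E c d"
    unfolding induces_diamond_def by blast
  then show "\<exists>a b c d. S = {a, b, c, d} \<and> diamond E a b c d"
    unfolding diamond_def card_4_iff_distinct by metis
next
  assume "\<exists>a b c d. S = {a, b, c, d} \<and> diamond E a b c d"
  then obtain a b c d where "S = {a, b, c, d}" "diamond E a b c d" by blast
  then show "induces_diamond E S"
    unfolding induces_diamond_def diamond_def card_4_iff_distinct
    by (intro exI[of _ a] exI[of _ b] exI[of _ c] exI[of _ d]) simp
qed

definition delete_edge :: "('a \<Rightarrow> 'a \<Rightarrow> bool) \<Rightarrow> 'a \<Rightarrow> 'a \<Rightarrow> 'a \<Rightarrow> 'a \<Rightarrow> bool" where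
  "delete_edge E p q u v \<longleftrightarrow> E u v \<and> {u, v} \<noteq> {p, q}"

lemma infected_mono: "infected V E r S x \<Longrightarrow> S \<subseteq> S' \<Longrightarrow> infected V E r S' x"
proof (induction rule: infected.induct)
  case (init x) then show ?case by (auto intro: infected.init)
next
  case (step x T) then show ?case by (auto intro: infected.step)
qed

definition set_dist :: "('a \<Rightarrow> 'a \<Rightarrow> bool) \<Rightarrow> 'a \<Rightarrow> 'a set \<Rightarrow> nat" where
  "set_dist A q X = (LEAST n. \<exists>x\<in>X. (A ^^ n) q x)"

definition nearest :: "('a \<Rightarrow> 'a \<Rightarrow> bool) \<Rightarrow> 'a \<Rightarrow> 'a set \<Rightarrow> 'a" where
  "nearest A q X = (SOME x. x \<in> X \<and> (A ^^ set_dist A q X) q x)"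

lemma set_dist_le: "x \<in> X \<Longrightarrow> (A ^^ n) q x \<Longrightarrow> set_dist A q X \<le> n"
  unfolding set_dist_def by (rule Least_le) blast

lemma nearest:
  assumes "x \<in> X" "A\<^sup>*\<^sup>* q x"
  shows "nearest A q X \<in> X \<and> (A ^^ set_dist A q X) q (nearest A q X)"
proof -
  obtain n where n: "(A ^^ n) q x" using assms(2) rtranclp_imp_relpowp by metis
  have "\<exists>y\<in>X. (A ^^ set_dist A q X) q y"
    unfolding set_dist_def by (rule LeastI[of _ n]) (use assms(1) n in blast)
  then obtain y where "y \<in> X \<and> (A ^^ set_dist A q X) q y" by blast
  then show ?thesis unfolding nearest_def by (rule someI)
qed

lemma nearest_self:
  assumes "q \<in> X"
  shows "nearest A q X = q"
proof -
  have "set_dist A q X = 0" using set_dist_le[where n = 0, OF assms] by simp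
  then show ?thesis using nearest[where A = A, OF assms rtranclp.rtrancl_refl] by simp
qed

lemma nearest_predecessor:
  assumes "x \<in> X" "A\<^sup>*\<^sup>* q x" "q \<notin> X"
  obtains v k where "(A ^^ k) q v" "A v (nearest A q X)" "v \<notin> X" "set_dist A q X = Suc k"
proof -
  have near: "nearest A q X \<in> X" "(A ^^ set_dist A q X) q (nearest A q X)"
    using nearest[OF assms(1,2)] by auto
  have "set_dist A q X \<noteq> 0" using near assms(3) by (metis relpowp_0_E)
  then obtain k where k: "set_dist A q X = Suc k" using not0_implies_Suc by blast
  then obtain v where v: "(A ^^ k) q v" "A v (nearest A q X)" using near(2) relpowp_Suc_E by metis
  have "v \<notin> X"
  proof
    assume "v \<in> X"
    then have "set_dist A q X \<le> k" using set_dist_le v(1) by metis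
    then show False using k by simp
  qed
  then show thesis using that v k by blast
qed

lemma card_insert_image_le: "finite A \<Longrightarrow> card (insert x (f ` A)) \<le> card A + 1"
  using card_image_le[of A f] by (simp add: card_insert_if)

lemma card_insert_image_remove_le:
  assumes "finite A" "a \<in> A"
  shows "card (insert x (f ` (A - {a}))) \<le> card A"
  using card_insert_image_le[of "A - {a}" x f] card.remove[OF assms] assms(1) by simp

lemma m_perc_eqI:
  assumes "\<And>S. percolating V E r S \<Longrightarrow> b \<le> card S" and "percolating V E r S" "card S \<le> b"
  shows "m_perc V E r = b"
proof -
  have "card S = b" using assms by (simp add: le_antisym)
  then have "m_perc V E r \<le> b" unfolding m_perc_def by (intro Least_le) (use assms(2) in blast)
  moreover have "\<exists>S'. percolating V E r S' \<and> card S' = m_perc V E r"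
    unfolding m_perc_def by (rule LeastI_ex) (use assms(2) in blast)
  then have "b \<le> m_perc V E r" using assms(1) by metis
  ultimately show ?thesis by simp
qed

lemma graph_iso_sym:
  assumes "graph_iso V E W F"
  shows "graph_iso W F V E"
proof -
  obtain f where f: "bij_betw f V W" "\<forall>x\<in>V. \<forall>y\<in>V. E x y \<longleftrightarrow> F (f x) (f y)"
    using assms unfolding graph_iso_def by blast
  let ?g = "inv_into V f"
  have g: "bij_betw ?g W V" using f(1) by (rule bij_betw_inv_into)
  have "F x y \<longleftrightarrow> E (?g x) (?g y)" if "x \<in> W" "y \<in> W" for x y
  proof -
    have "?g x \<in> V" "?g y \<in> V" using g that bij_betwE by blast+
    moreover have "f (?g x) = x" "f (?g y) = y" using f(1) that
      by (simp_all add: bij_betw_inv_into_right)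
    ultimately show ?thesis using f(2) by metis
  qed
  then show ?thesis using g unfolding graph_iso_def by blast
qed

lemma graph_iso_diamond:
  assumes g: "bij_betw g W V" "\<forall>x\<in>W. \<forall>y\<in>W. F x y \<longleftrightarrow> E (g x) (g y)"
    and sub: "{a, b, c, d} \<subseteq> W" and D: "diamond F a b c d"
  shows "diamond E (g a) (g b) (g c) (g d)"
proof -
  have "inj_on g (set [a, b, c, d])" using inj_on_subset[OF bij_betw_imp_inj_on[OF g(1)] sub]
    by simp
  then have "distinct (map g [a, b, c, d])" using D unfolding diamond_def
    by (simp only: distinct_map)
  then have "distinct [g a, g b, g c, g d]" by simp
  moreover have "F x y \<longleftrightarrow> E (g x) (g y)" if "x \<in> {a, b, c, d}" "y \<in> {a, b, c, d}" for x y
    using g(2) sub that by blast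
  ultimately show ?thesis using D unfolding diamond_def by simp
qed

lemma Suc_mod_neq: "2 \<le> (k::nat) \<Longrightarrow> i < k \<Longrightarrow> (i + 1) mod k \<noteq> i"
proof (cases "i + 1 < k")
  case False
  moreover assume "2 \<le> k" "i < k"
  ultimately have "i + 1 = k" by simp
  then show ?thesis using \<open>2 \<le> k\<close> by simp
qed simp

lemma necklace_E_same:
  assumes "2 \<le> k" "i < k" "j < 4" "j' < 4"
  shows "necklace_E k (i, j) (i, j') \<longleftrightarrow> j \<noteq> j' \<and> {j, j'} \<noteq> {0, 1}"
  using assms Suc_mod_neq[OF assms(1,2)] unfolding necklace_E_def necklace_V_def by auto

lemma necklace_E_diff:
  assumes "i < k" "i' < k" "j < 4" "j' < 4" "i \<noteq> i'"
  shows "necklace_E k (i, j) (i', j') \<longleftrightarrow>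
    (j = 0 \<and> j' = 1 \<and> i' = (i + 1) mod k) \<or> (j = 1 \<and> j' = 0 \<and> i = (i' + 1) mod k)"
  using assms unfolding necklace_E_def necklace_V_def by auto

lemma necklace_diamond:
  assumes "2 \<le> k" "i < k"
  shows "diamond (necklace_E k) (i, 0) (i, 1) (i, 2) (i, 3)"
  using necklace_E_same[OF assms] unfolding diamond_def by (simp add: doubleton_eq_iff)

lemma diamond_necklace_nonempty:
  assumes "is_diamond_necklace V E"
  shows "V \<noteq> {}"
proof -
  obtain k f where "2 \<le> k" "bij_betw f V (necklace_V k)"
    using assms unfolding is_diamond_necklace_def graph_iso_def by blast
  moreover have "(0, 0) \<in> necklace_V k" if "2 \<le> k" using that unfolding necklace_V_def by simp
  ultimately show ?thesis unfolding bij_betw_def by blast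
qed

locale undirected_graph =
  fixes V :: "'a set" and E :: "'a \<Rightarrow> 'a \<Rightarrow> bool"
  assumes simple: "simple_graph V E"
begin

abbreviation nbrs :: "'a \<Rightarrow> 'a set" where
  "nbrs v \<equiv> {w. E v w}"

abbreviation infected2 :: "'a set \<Rightarrow> 'a \<Rightarrow> bool" where
  "infected2 S \<equiv> infected V E 2 S"

lemma finite_V: "finite V"
  using simple by (simp add: simple_graph_def)

lemma E_in_V: assumes "E x y" shows "x \<in> V" "y \<in> V"
  using simple assms by (simp_all add: simple_graph_def)

lemma E_sym: "E x y \<Longrightarrow> E y x"
  using simple by (simp add: simple_graph_def)

lemma E_commute: "E x y \<longleftrightarrow> E y x"
  using E_sym by blast

lemma E_irrefl [simp]: "\<not> E x x"
  using simple by (simp add: simple_graph_def)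

lemma E_neq: "E x y \<Longrightarrow> x \<noteq> y"
  by auto

lemma finite_nbrs: "finite (nbrs v)"
  by (rule finite_subset[OF _ finite_V]) (auto intro: E_in_V)

lemma infected2_step:
  "x \<in> V \<Longrightarrow> E x y \<Longrightarrow> E x z \<Longrightarrow> y \<noteq> z \<Longrightarrow> infected2 S y \<Longrightarrow> infected2 S z \<Longrightarrow> infected2 S x"
  by (rule infected.step[where T = "{y, z}"]) auto

lemma infected_subset:
  assumes "infected V E r S x" and "S \<subseteq> I" and "\<And>z. z \<in> V \<Longrightarrow> z \<notin> I \<Longrightarrow> card (nbrs z \<inter> I) < r"
  shows "x \<in> I"
  using assms(1)
proof (induction rule: infected.induct)
  case (init x)
  then show ?case using assms(2) by blast
next
  case (step x T)
  show ?case
  proof (rule ccontr)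
    assume "x \<notin> I"
    have "T \<subseteq> nbrs x \<inter> I" using step by auto
    then have "card T \<le> card (nbrs x \<inter> I)" using finite_nbrs by (intro card_mono) auto
    then show False using assms(3)[OF step(1) \<open>x \<notin> I\<close>] step(3) by simp
  qed
qed

lemma exists_newly_infected:
  assumes "I \<subseteq> V" "I \<noteq> V" "\<forall>x\<in>V. infected2 I x"
  obtains x where "x \<in> V" "x \<notin> I" "2 \<le> card (nbrs x \<inter> I)"
proof -
  have "\<exists>x\<in>V - I. 2 \<le> card (nbrs x \<inter> I)"
  proof (rule ccontr)
    assume "\<not> ?thesis"
    then have "card (nbrs z \<inter> I) < 2" if "z \<in> V" "z \<notin> I" for z
      using that not_le by blast
    then have "x \<in> I" if "x \<in> V" for x
      using infected_subset[of 2 I x I] assms(3) that by blast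
    then show False using assms(1,2) by blast
  qed
  then show thesis using that by blast
qed

definition inner_degree_sum :: "'a set \<Rightarrow> nat" where
  "inner_degree_sum I = (\<Sum>v\<in>I. card (nbrs v \<inter> I))"

lemma inner_degree_sum_insert:
  assumes "finite I" "x \<notin> I"
  shows "inner_degree_sum (insert x I) = inner_degree_sum I + 2 * card (nbrs x \<inter> I)"
proof -
  have new_nbr: "card (nbrs v \<inter> insert x I) = card (nbrs v \<inter> I) + (if E v x then 1 else 0)" for v
    using assms finite_nbrs by (auto simp: Int_insert_right card_insert_if)
  have "(\<Sum>v\<in>I. (if E v x then 1 else 0 :: nat)) = card {v\<in>I. E v x}"
    using assms(1) by (simp add: sum.If_cases Int_def)
  also have "{v\<in>I. E v x} = nbrs x \<inter> I"
    using E_commute by blast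
  finally have "(\<Sum>v\<in>I. card (nbrs v \<inter> insert x I)) = inner_degree_sum I + card (nbrs x \<inter> I)"
    unfolding inner_degree_sum_def new_nbr by (simp add: sum.distrib)
  moreover have "nbrs x \<inter> insert x I = nbrs x \<inter> I"
    by auto
  ultimately show ?thesis
    using assms unfolding inner_degree_sum_def by simp
qed

lemma even_inner_degree_sum: "finite C \<Longrightarrow> even (inner_degree_sum C)"
proof (induction rule: finite_induct)
  case empty
  then show ?case by (simp add: inner_degree_sum_def)
next
  case (insert x C)
  then show ?case by (simp add: inner_degree_sum_insert)
qed

lemma diamond_nth_adj:
  assumes D: "diamond E a b c d" and j: "j < 4" "j' < 4"
  shows "E ([a, b, c, d] ! j) ([a, b, c, d] ! j') \<longleftrightarrow> j \<noteq> j' \<and> {j, j'} \<noteq> {0, 1}"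
proof -
  have "j \<in> {0, 1, 2, 3}" "j' \<in> {0, 1, 2, 3}" using j by auto
  then show ?thesis using D unfolding diamond_def by (auto simp: E_commute doubleton_eq_iff)
qed

end

locale cubic_graph = undirected_graph +
  assumes cubic: "cubic V E"
begin

lemma card_nbrs: "v \<in> V \<Longrightarrow> card (nbrs v) = 3"
  using cubic by (simp add: cubic_def)

lemma nbrs_eq:
  assumes "E v x" "E v y" "E v z" "distinct [x, y, z]"
  shows "nbrs v = {x, y, z}"
proof -
  have "card (nbrs v) = 3" using assms(1) E_in_V card_nbrs by blast
  moreover have "{x, y, z} \<subseteq> nbrs v" using assms by auto
  moreover have "card {x, y, z} = 3" using assms(4) by simp
  ultimately show ?thesis using card_subset_eq[OF finite_nbrs] by (metis (no_types, lifting))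
qed

lemma third_nbr:
  assumes "E v x" "E v y" "x \<noteq> y"
  obtains z where "E v z" "z \<noteq> x" "z \<noteq> y"
proof -
  have "\<not> nbrs v \<subseteq> {x, y}"
  proof
    assume "nbrs v \<subseteq> {x, y}"
    then have "card (nbrs v) \<le> card {x, y}" by (rule card_mono[rotated]) simp
    also have "\<dots> \<le> 2" by (simp add: card_insert_if)
    finally show False using card_nbrs[OF E_in_V(1)[OF assms(1)]] by simp
  qed
  then show ?thesis using that by blast
qed

lemma card_nbrs_split: "x \<in> V \<Longrightarrow> card (nbrs x - I) + card (nbrs x \<inter> I) = 3"
  using card_Int_Diff[OF finite_nbrs, of x I] card_nbrs by simp

lemma inner_degree_sum_V: "inner_degree_sum V = 3 * card V"
proof -
  have "nbrs v \<inter> V = nbrs v" for v using E_in_V by blast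
  then show ?thesis unfolding inner_degree_sum_def using card_nbrs by simp
qed

text \<open>Each newly infected vertex has at least two infected neighbours, so it removes at least one
  edge from the boundary of the infected set; the last one removes three.\<close>
lemma percolation_boundary:
  assumes "I \<subseteq> V" "I \<noteq> V" "\<forall>x\<in>V. infected2 I x"
  shows "inner_degree_sum I + card (V - I) + 2 \<le> 3 * card I"
  using assms
proof (induction "card (V - I)" arbitrary: I rule: less_induct)
  case less
  have fin: "finite I" using less.prems(1) finite_V finite_subset by blast
  obtain x where x: "x \<in> V" "x \<notin> I" and two: "2 \<le> card (nbrs x \<inter> I)"
    by (rule exists_newly_infected[OF less.prems])
  have step: "inner_degree_sum (insert x I) = inner_degree_sum I + 2 * card (nbrs x \<inter> I)"
    using inner_degree_sum_insert[OF fin x(2)] .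
  have card_insert: "card (insert x I) = Suc (card I)" using fin x(2) by simp
  show ?case
  proof (cases "insert x I = V")
    case True
    then have "nbrs x \<subseteq> I" using E_in_V(2) E_neq by blast
    then have "card (nbrs x \<inter> I) = 3" using card_nbrs x(1) by (simp add: Int_absorb2)
    then have "3 * card V = inner_degree_sum I + 6" using step True inner_degree_sum_V by simp
    moreover have "V - I = {x}" using True x(2) by blast
    ultimately show ?thesis using True card_insert by simp
  next
    case False
    have "V - insert x I = (V - I) - {x}" by blast
    then have n: "card (V - insert x I) + 1 = card (V - I)"
      using card.remove[of "V - I" x] x finite_V by simp
    have "insert x I \<subseteq> V" using less.prems(1) x(1) by blast
    moreover have "\<forall>y\<in>V. infected2 (insert x I) y"
      using less.prems(3) by (metis infected_mono subset_insertI)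
    ultimately have "inner_degree_sum (insert x I) + card (V - insert x I) + 2 \<le> 3 * card (insert x I)"
      using less.hyps[of "insert x I"] n False by simp
    then show ?thesis using n step two card_insert by linarith
  qed
qed

lemma percolating_card_lower:
  assumes "percolating V E 2 S" "V \<noteq> {}"
  shows "card V + 2 \<le> 4 * card S"
proof (cases "S = V")
  case True
  have "card V \<ge> 1" using assms(2) finite_V by (simp add: Suc_leI card_gt_0_iff)
  then show ?thesis using True by simp
next
  case False
  have S: "S \<subseteq> V" "\<forall>x\<in>V. infected2 S x" using assms(1) unfolding percolating_def by auto
  have "card (V - S) + 2 \<le> 3 * card S"
    using percolation_boundary[OF S(1) False S(2)] by simp
  moreover have "card (V - S) = card V - card S" "card S \<le> card V"
    using S(1) finite_V by (auto simp: card_Diff_subset finite_subset card_mono)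
  ultimately show ?thesis by linarith
qed

end

locale claw_free_cubic_graph = cubic_graph +
  assumes connected: "graph_connected V E"
    and claw_free: "claw_free V E"
    and not_K4: "\<not> is_K4 V E"
begin

section \<open>Units\<close>

lemma connected_closed_set:
  assumes "x \<in> V" "x \<in> K" "\<And>u v. u \<in> K \<Longrightarrow> E u v \<Longrightarrow> v \<in> K"
  shows "V \<subseteq> K"
proof
  fix v assume "v \<in> V"
  then have "E\<^sup>*\<^sup>* x v" using connected assms(1) unfolding graph_connected_def by blast
  then show "v \<in> K"
    by (induction rule: rtranclp_induct) (use assms(2,3) in blast)+
qed

lemma claw_free_nbrs:
  assumes "E v x" "E v y" "E v z" "distinct [x, y, z]"
  shows "E x y \<or> E x z \<or> E y z"
proof -
  have "v \<in> V" "x \<in> V" "y \<in> V" "z \<in> V" using assms(1-3) E_in_V by blast+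
  moreover have "x \<noteq> y" "x \<noteq> z" "y \<noteq> z" using assms(4) by auto
  ultimately show ?thesis using claw_free assms(1-3) unfolding claw_free_def by blast
qed

text \<open>Since the graph is connected and cubic, a \<open>K\<^sub>4\<close> would be all of it.\<close>
lemma no_K4:
  assumes "distinct [x, y, z, w]" "E x y" "E x z" "E x w" "E y z" "E y w" "E z w"
  shows False
proof -
  let ?K = "{x, y, z, w}"
  have sym: "E y x" "E z x" "E w x" "E z y" "E w y" "E w z" using assms(2-7) E_sym by blast+
  have "nbrs x = {y, z, w}" by (rule nbrs_eq) (use assms in auto)
  moreover have "nbrs y = {x, z, w}" by (rule nbrs_eq) (use assms sym in auto)
  moreover have "nbrs z = {x, y, w}" by (rule nbrs_eq) (use assms sym in auto)
  moreover have "nbrs w = {x, y, z}" by (rule nbrs_eq) (use assms sym in auto)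
  ultimately have closed: "v \<in> ?K" if "u \<in> ?K" "E u v" for u v
    using that by blast
  have "V \<subseteq> ?K" by (rule connected_closed_set[OF E_in_V(1)[OF assms(2)] _ closed]) simp
  moreover have "?K \<subseteq> V"
    using E_in_V(1)[OF assms(2)] E_in_V(2)[OF assms(2)] E_in_V(2)[OF assms(3)] E_in_V(2)[OF assms(4)] by simp
  ultimately have "V = ?K" by blast
  moreover have "card ?K = 4" using card_4_iff_distinct assms(1) by simp
  moreover have "\<forall>u\<in>?K. \<forall>v\<in>?K. u \<noteq> v \<longrightarrow> E u v" using assms(2-7) sym by auto
  ultimately show False using not_K4 unfolding is_K4_def by blast
qed

lemma induces_triangle_iff: "induces_triangle E T \<longleftrightarrow> (\<exists>x y z. T = {x, y, z} \<and> triangle E x y z)"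
proof
  assume "induces_triangle E T"
  then obtain x y z where "T = {x, y, z}" "distinct [x, y, z]" "\<forall>u\<in>T. \<forall>w\<in>T. u \<noteq> w \<longrightarrow> E u w"
    unfolding induces_triangle_def card_3_iff by auto
  then show "\<exists>x y z. T = {x, y, z} \<and> triangle E x y z" unfolding triangle_def by auto
next
  assume "\<exists>x y z. T = {x, y, z} \<and> triangle E x y z"
  then obtain x y z where "T = {x, y, z}" "triangle E x y z" by blast
  then show "induces_triangle E T"
    unfolding induces_triangle_def triangle_def card_3_iff by (auto simp: E_commute)
qed

lemma induces_triangle_at:
  assumes "induces_triangle E T" "v \<in> T"
  obtains p q where "T = {v, p, q}" "triangle E v p q"
proof -
  obtain x y z where T: "T = {x, y, z}" "distinct [x, y, z]" and adj: "\<forall>u\<in>T. \<forall>w\<in>T. u \<noteq> w \<longrightarrow> E u w"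
    using assms(1) unfolding induces_triangle_def card_3_iff by auto
  then obtain p q where "T = {v, p, q}" "distinct [v, p, q]"
    using assms(2) by (auto simp: insert_commute)
  then show ?thesis using that adj unfolding triangle_def by simp
qed

lemma diamond_sym:
  assumes "diamond E a b c d"
  shows "diamond E b a c d" "diamond E a b d c"
  using assms unfolding diamond_def by (auto simp: E_commute)

lemma diamond_triangles:
  assumes "diamond E a b c d"
  shows "induces_triangle E {a, c, d}" "induces_triangle E {b, c, d}"
  using assms unfolding diamond_def induces_triangle_def by (auto simp: card_insert_if E_commute)

lemma nbrs_diamond_hub: "diamond E a b c d \<Longrightarrow> nbrs c = {a, b, d}"
  unfolding diamond_def using nbrs_eq[of c a b d] by (auto simp: E_commute)

lemma triangle_subset_diamond:
  assumes D: "diamond E a b c d" and T: "induces_triangle E T" and meet: "T \<inter> {a, b, c, d} \<noteq> {}"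
  shows "T \<subseteq> {a, b, c, d}"
proof -
  have hub: "nbrs h \<subseteq> {a, b, c, d}" if "h \<in> {c, d}" for h
    using that nbrs_diamond_hub[OF D] nbrs_diamond_hub[OF diamond_sym(2)[OF D]] by auto
  have from_hub: ?thesis if h: "h \<in> T" "h \<in> {c, d}" for h
  proof -
    obtain p q where "T = {h, p, q}" "triangle E h p q" by (rule induces_triangle_at[OF T h(1)])
    then show ?thesis using hub[OF h(2)] h(2) unfolding triangle_def by auto
  qed
  obtain v where v: "v \<in> T" "v \<in> {a, b, c, d}" using meet by blast
  show ?thesis
  proof (cases "v \<in> {c, d}")
    case True
    then show ?thesis using from_hub v(1) by blast
  next
    case False
    obtain p q where pq: "T = {v, p, q}" "triangle E v p q" by (rule induces_triangle_at[OF T v(1)])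
    show ?thesis
    proof (cases "p \<in> {c, d} \<or> q \<in> {c, d}")
      case True
      then show ?thesis using from_hub pq(1) by blast
    next
      case False
      have "E v c" "E v d" using D v \<open>v \<notin> {c, d}\<close> unfolding diamond_def by (auto simp: E_commute)
      moreover have "E v p" "distinct [c, d, p]" using pq(2) False D
        unfolding triangle_def diamond_def by auto
      ultimately have "nbrs v = {c, d, p}" using nbrs_eq by blast
      then show ?thesis using pq(2) False unfolding triangle_def by auto
    qed
  qed
qed

lemma diamond_eq:
  assumes D: "diamond E a b c d" and D': "diamond E a' b' c' d'"
    and meet: "{a, b, c, d} \<inter> {a', b', c', d'} \<noteq> {}"
  shows "{a', b', c', d'} = {a, b, c, d}"
proof -
  let ?D = "{a, b, c, d}"
  note T = diamond_triangles[OF D']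
  note sub = triangle_subset_diamond[OF D T(1)] triangle_subset_diamond[OF D T(2)]
  obtain u where u: "u \<in> ?D" "u \<in> {a', b', c', d'}" using meet by blast
  have "c' \<in> ?D"
  proof (cases "u = b'")
    case True
    then have "{b', c', d'} \<subseteq> ?D" using u by (intro sub(2)) blast
    then show ?thesis by blast
  next
    case False
    then have "{a', c', d'} \<subseteq> ?D" using u by (intro sub(1)) blast
    then show ?thesis by blast
  qed
  then have "{a', c', d'} \<subseteq> ?D" "{b', c', d'} \<subseteq> ?D"
    by (intro sub; blast)+
  then have "{a', b', c', d'} \<subseteq> ?D" by blast
  moreover have "card {a', b', c', d'} = 4" "card ?D = 4"
    using D D' card_4_iff_distinct unfolding diamond_def by simp_all
  ultimately show ?thesis using card_subset_eq[of ?D] by simp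
qed

text \<open>The two triangles share an edge \<open>v s\<close>, and their third vertices \<open>r\<close> and \<open>t\<close> are not
  adjacent since there is no \<open>K\<^sub>4\<close>.\<close>
lemma triangles_meet_in_diamond:
  assumes T1: "triangle E v x y" and T2: "triangle E v x' y'" and ne: "{v, x, y} \<noteq> {v, x', y'}"
  obtains a b c d where "diamond E a b c d" "v \<in> {a, b, c, d}"
proof -
  have shared: thesis
    if "E v s" "E v r" "E v t" "E s r" "E s t" "distinct [v, s, r, t]" for s r t
  proof -
    have "\<not> E r t" using no_K4[of v s r t] that by blast
    then have "diamond E r t v s" using that unfolding diamond_def by (auto simp: E_commute)
    then show thesis using that(1) \<open>\<And>a b c d. diamond E a b c d \<Longrightarrow> v \<in> {a, b, c, d} \<Longrightarrow> thesis\<close>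
      by blast
  qed
  have t1: "E v x" "E v y" "E x y" "distinct [v, x, y]"
    and t2: "E v x'" "E v y'" "E x' y'" "distinct [v, x', y']"
    using T1 T2 unfolding triangle_def by auto
  consider "x' = x" "y' \<noteq> y" | "x' = y" "y' \<noteq> x" | "y' = x" "x' \<noteq> y" | "y' = y" "x' \<noteq> x"
    | "x' \<notin> {x, y}" "y' \<notin> {x, y}"
    using ne by (auto simp: insert_commute)
  then show thesis
  proof cases
    case 1
    then show thesis using shared[of x y y'] t1 t2 by (simp add: E_commute)
  next
    case 2
    then show thesis using shared[of y x y'] t1 t2 by (auto simp: E_commute)
  next
    case 3
    then show thesis using shared[of x y x'] t1 t2 by (auto simp: E_commute)
  next
    case 4
    then show thesis using shared[of y x x'] t1 t2 by (auto simp: E_commute)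
  next
    case 5
    then have "nbrs v = {x, y, x'}" using nbrs_eq[of v x y x'] t1 t2 by auto
    then show thesis using 5 t2 by auto
  qed
qed

lemma vertex_in_triangle:
  assumes "v \<in> V"
  obtains x y where "triangle E v x y"
proof -
  obtain x y z where nb: "nbrs v = {x, y, z}" "distinct [x, y, z]"
    using card_nbrs[OF assms] unfolding card_3_iff by auto
  then have e: "E v x" "E v y" "E v z" by auto
  then have ne: "v \<noteq> x" "v \<noteq> y" "v \<noteq> z" using E_neq by auto
  have "triangle E v x y \<or> triangle E v x z \<or> triangle E v y z"
    using claw_free_nbrs[OF e nb(2)] e ne nb(2) unfolding triangle_def by auto
  then show thesis using that by blast
qed

definition units :: "'a set set" where
  "units = {X. induces_diamond E X \<or> (induces_triangle E X \<and> (\<forall>D. induces_diamond E D \<longrightarrow> X \<inter> D = {}))}"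

lemma unit_cases: "X \<in> units \<Longrightarrow> induces_triangle E X \<or> induces_diamond E X"
  unfolding units_def by blast

lemma induces_triangle_subset_V: "induces_triangle E T \<Longrightarrow> T \<subseteq> V"
  unfolding induces_triangle_iff triangle_def using E_in_V by blast

lemma induces_diamond_subset_V: "induces_diamond E D \<Longrightarrow> D \<subseteq> V"
  unfolding induces_diamond_iff diamond_def using E_in_V by blast

lemma unit_subset_V: "X \<in> units \<Longrightarrow> X \<subseteq> V"
  using unit_cases induces_triangle_subset_V induces_diamond_subset_V by blast

lemma card_unit: "X \<in> units \<Longrightarrow> card X = 3 \<or> card X = 4"
  using unit_cases unfolding induces_triangle_def induces_diamond_def by blast

lemma finite_unit: "X \<in> units \<Longrightarrow> finite X"
  using unit_subset_V finite_V finite_subset by blast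

lemma unit_nonempty: "X \<in> units \<Longrightarrow> X \<noteq> {}"
  using card_unit by fastforce

lemma finite_units: "finite units"
  using unit_subset_V finite_V by (metis Pow_iff finite_Pow_iff finite_subset subsetI)

lemma units_cover: "\<Union>units = V"
proof
  show "\<Union>units \<subseteq> V" using unit_subset_V by blast
  show "V \<subseteq> \<Union>units"
  proof
    fix v assume v: "v \<in> V"
    show "v \<in> \<Union>units"
    proof (cases "\<exists>D. induces_diamond E D \<and> v \<in> D")
      case True
      then show ?thesis unfolding units_def by blast
    next
      case False
      obtain x y where t: "triangle E v x y" using vertex_in_triangle[OF v] .
      then have T: "induces_triangle E {v, x, y}" unfolding induces_triangle_iff by blast
      have "{v, x, y} \<inter> D = {}" if "induces_diamond E D" for D
      proof (rule ccontr)
        assume "{v, x, y} \<inter> D \<noteq> {}"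
        then have "{v, x, y} \<subseteq> D"
          using that triangle_subset_diamond[OF _ T] unfolding induces_diamond_iff by blast
        then show False using False that by blast
      qed
      then show ?thesis using T unfolding units_def by blast
    qed
  qed
qed

lemma units_disjoint:
  assumes X: "X \<in> units" and Y: "Y \<in> units" and meet: "X \<inter> Y \<noteq> {}"
  shows "X = Y"
proof -
  have diamonds: ?thesis if "induces_diamond E X" "induces_diamond E Y"
    using that meet diamond_eq unfolding induces_diamond_iff by (metis inf_commute)
  have mixed: False if "induces_diamond E D" "T \<in> units" "\<not> induces_diamond E T" "T \<inter> D \<noteq> {}" for D T
    using that unfolding units_def by blast
  show ?thesis
  proof (cases "induces_diamond E X \<or> induces_diamond E Y")
    case True
    then show ?thesis using diamonds mixed[OF _ X] mixed[OF _ Y] meet by (metis inf_commute)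
  next
    case False
    then have TX: "induces_triangle E X" and TY: "induces_triangle E Y"
      using X Y unit_cases by blast+
    obtain v where v: "v \<in> X" "v \<in> Y" using meet by blast
    obtain p q where p: "X = {v, p, q}" "triangle E v p q" by (rule induces_triangle_at[OF TX v(1)])
    obtain p' q' where p': "Y = {v, p', q'}" "triangle E v p' q'"
      by (rule induces_triangle_at[OF TY v(2)])
    show ?thesis
    proof (rule ccontr)
      assume "X \<noteq> Y"
      then obtain a b c d where "diamond E a b c d" "v \<in> {a, b, c, d}"
        using triangles_meet_in_diamond[OF p(2) p'(2)] p(1) p'(1) by metis
      then show False using mixed[OF _ X] False v(1) unfolding induces_diamond_iff by blast
    qed
  qed
qed

lemma units_partition: "unit_partition V E units"
  unfolding unit_partition_def using units_cover units_disjoint unit_cases by blast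

lemma unit_partition_part_in_diamond:
  assumes Q: "unit_partition V E Q" and A: "A \<in> Q"
    and D: "induces_diamond E D" and meet: "A \<inter> D \<noteq> {}"
  shows "A \<subseteq> D"
proof -
  obtain a b c d where abcd: "D = {a, b, c, d}" "diamond E a b c d"
    using D unfolding induces_diamond_iff by blast
  show ?thesis
  proof (cases "induces_diamond E A")
    case True
    then show ?thesis using diamond_eq abcd meet unfolding induces_diamond_iff by (metis order_refl)
  next
    case False
    then have "induces_triangle E A" using Q A unfolding unit_partition_def by blast
    then show ?thesis using triangle_subset_diamond[OF abcd(2)] abcd(1) meet by blast
  qed
qed

text \<open>A triangle of another unit partition cannot lie inside a diamond: together with the part
  through a vertex of the diamond outside it, it would give six vertices among four.\<close>
lemma unit_partition_subset_units:
  assumes Q: "unit_partition V E Q" and X: "X \<in> Q"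
  shows "X \<in> units"
proof (cases "induces_diamond E X")
  case False
  have cov: "\<Union>Q = V" and dis: "\<And>A B. A \<in> Q \<Longrightarrow> B \<in> Q \<Longrightarrow> A \<noteq> B \<Longrightarrow> A \<inter> B = {}"
    and card3: "\<And>A. A \<in> Q \<Longrightarrow> card A \<ge> 3"
    using Q unfolding unit_partition_def induces_triangle_def induces_diamond_def by auto
  have TX: "induces_triangle E X" using Q X False unfolding unit_partition_def by blast
  have "X \<inter> D = {}" if D: "induces_diamond E D" for D
  proof (rule ccontr)
    assume "X \<inter> D \<noteq> {}"
    then have XD: "X \<subseteq> D" using unit_partition_part_in_diamond[OF Q X D] by blast
    have cX: "card X = 3" and cD: "card D = 4"
      using TX D unfolding induces_triangle_def induces_diamond_def by auto
    then have "X \<noteq> D" by auto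
    then obtain w where w: "w \<in> D" "w \<notin> X" using XD by blast
    then obtain Y where Y: "Y \<in> Q" "w \<in> Y" using cov induces_diamond_subset_V[OF D] by blast
    have YD: "Y \<subseteq> D" using unit_partition_part_in_diamond[OF Q Y(1) D] w Y(2) by blast
    have XY: "X \<inter> Y = {}" using dis[OF X Y(1)] Y(2) w(2) by blast
    have "card X + card Y = card (X \<union> Y)"
      using XY cX card3[OF Y(1)]
        by (intro card_Un_disjoint[symmetric]) (auto intro: card_ge_0_finite)
    also have "\<dots> \<le> card D" using XD YD cD by (intro card_mono) (auto intro: card_ge_0_finite)
    finally show False using cX card3[OF Y(1)] cD by simp
  qed
  then show ?thesis using TX unfolding units_def by blast
qed (simp add: units_def)

lemma unit_partition_unique:
  assumes Q: "unit_partition V E Q"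
  shows "Q = units"
proof -
  have cov: "\<Union>Q = V" using Q unfolding unit_partition_def by blast
  have "X \<in> Q" if X: "X \<in> units" for X
  proof -
    obtain v where v: "v \<in> X" using unit_nonempty[OF X] by blast
    then obtain Y where "Y \<in> Q" "v \<in> Y" using cov unit_subset_V[OF X] by blast
    then show ?thesis using units_disjoint[OF X unit_partition_subset_units[OF Q]] v by blast
  qed
  then show ?thesis using unit_partition_subset_units[OF Q] by blast
qed

lemma num_units_eq: "num_units V E = card units"
  unfolding num_units_def using units_partition unit_partition_unique by (metis the_equality)

definition unit_of :: "'a \<Rightarrow> 'a set" where
  "unit_of v = (THE X. X \<in> units \<and> v \<in> X)"

lemma unit_of_eq: "X \<in> units \<Longrightarrow> v \<in> X \<Longrightarrow> unit_of v = X"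
  unfolding unit_of_def using units_disjoint by (intro the_equality) blast+

lemma unit_of: "v \<in> V \<Longrightarrow> unit_of v \<in> units \<and> v \<in> unit_of v"
  using units_cover unit_of_eq by blast

section \<open>Percolation through units\<close>

definition is_hub :: "'a set \<Rightarrow> 'a \<Rightarrow> bool" where
  "is_hub X h \<longleftrightarrow> h \<in> X \<and> (\<forall>w\<in>X. w \<noteq> h \<longrightarrow> E h w)"

lemma unit_two_hubs:
  assumes "X \<in> units"
  obtains h h' where "h \<noteq> h'" "is_hub X h" "is_hub X h'"
proof (cases "induces_triangle E X")
  case True
  then obtain x y z where "X = {x, y, z}" "triangle E x y z" unfolding induces_triangle_iff by blast
  then have "is_hub X x" "is_hub X y" "x \<noteq> y"
    unfolding is_hub_def triangle_def by (auto simp: E_commute)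
  then show thesis using that by blast
next
  case False
  then obtain a b c d where "X = {a, b, c, d}" "diamond E a b c d"
    using assms unit_cases unfolding induces_diamond_iff by blast
  then have "is_hub X c" "is_hub X d" "c \<noteq> d"
    unfolding is_hub_def diamond_def by (auto simp: E_commute)
  then show thesis using that by blast
qed

lemma unit_hub_avoiding:
  assumes "X \<in> units"
  obtains h where "is_hub X h" "h \<noteq> x"
  using unit_two_hubs[OF assms] by metis

lemma two_nbrs_in_unit:
  assumes X: "X \<in> units" and x: "x \<in> X"
  shows "2 \<le> card (nbrs x \<inter> X)"
proof -
  obtain h h' where hh: "h \<noteq> h'" "is_hub X h" "is_hub X h'" by (rule unit_two_hubs[OF X])
  have "\<exists>y z. y \<noteq> z \<and> {y, z} \<subseteq> nbrs x \<inter> X"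
  proof (cases "x \<in> {h, h'}")
    case True
    then obtain g where g: "is_hub X x" "is_hub X g" "g \<noteq> x" using hh by blast
    have "card X \<ge> 3" using card_unit[OF X] by auto
    then obtain w where w: "w \<in> X" "w \<noteq> x" "w \<noteq> g"
      using finite_unit[OF X] by (metis card_le_Suc_iff numeral_3_eq_3 insert_iff) 
    then show ?thesis using g unfolding is_hub_def by blast
  next
    case False
    then have "E h x" "E h' x" using hh x unfolding is_hub_def by auto
    then have "{h, h'} \<subseteq> nbrs x \<inter> X" using hh unfolding is_hub_def by (auto simp: E_commute)
    then show ?thesis using hh(1) by blast
  qed
  then obtain y z where "y \<noteq> z" "{y, z} \<subseteq> nbrs x \<inter> X" by blast
  then have "card {y, z} \<le> card (nbrs x \<inter> X)" using finite_nbrs by (intro card_mono) auto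
  then show ?thesis using \<open>y \<noteq> z\<close> by simp
qed

lemma card_nbrs_outside_unit:
  assumes "X \<in> units" "x \<in> X"
  shows "card (nbrs x - X) \<le> 1"
  using two_nbrs_in_unit[OF assms] card_nbrs_split[of x X] unit_subset_V assms by fastforce

lemma outside_nbr_unique:
  assumes "X \<in> units" "x \<in> X" "E x v" "v \<notin> X" "E x w" "w \<notin> X"
  shows "v = w"
proof (rule ccontr)
  assume "v \<noteq> w"
  then have "card {v, w} \<le> card (nbrs x - X)" using assms(3-6) finite_nbrs by (intro card_mono) auto
  then show False using card_nbrs_outside_unit[OF assms(1,2)] \<open>v \<noteq> w\<close> by simp
qed

lemma unit_infected:
  assumes X: "X \<in> units" and xy: "x \<in> X" "y \<in> X" "x \<noteq> y" "infected2 S x" "infected2 S y"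
    and z: "z \<in> X"
  shows "infected2 S z"
proof -
  have XV: "X \<subseteq> V" using unit_subset_V[OF X] .
  have from_two: "infected2 S v" if "v \<in> X" "E v u" "E v u'" "u \<noteq> u'" "infected2 S u" "infected2 S u'" for v u u'
    using infected2_step that XV by blast
  obtain h h' where hh: "h \<noteq> h'" "is_hub X h" "is_hub X h'" by (rule unit_two_hubs[OF X])
  have hub_infected: "infected2 S g" if "is_hub X g" for g
  proof (cases "g \<in> {x, y}")
    case True
    then show ?thesis using xy by blast
  next
    case False
    then have "E g x" "E g y" using that xy unfolding is_hub_def by auto
    then show ?thesis using from_two[of g x y] that xy unfolding is_hub_def by blast
  qed
  show ?thesis
  proof (cases "z \<in> {h, h'}")
    case True
    then show ?thesis using hub_infected hh by blast
  next
    case False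
    then have "E z h" "E z h'" using hh z unfolding is_hub_def by (auto simp: E_commute)
    then show ?thesis using from_two[OF z] hh hub_infected by blast
  qed
qed

lemma unit_meets_percolating:
  assumes S: "percolating V E 2 S" and X: "X \<in> units"
  shows "S \<inter> X \<noteq> {}"
proof
  assume SX: "S \<inter> X = {}"
  have few: "card (nbrs z \<inter> (V - X)) < 2" if "z \<in> V" "z \<notin> V - X" for z
  proof -
    have "card (nbrs z \<inter> (V - X)) \<le> card (nbrs z - X)" using finite_nbrs by (intro card_mono) auto
    then show ?thesis using card_nbrs_outside_unit[OF X] that by fastforce
  qed
  obtain x where x: "x \<in> X" using unit_nonempty[OF X] by blast
  then have "infected2 S x" using S unit_subset_V[OF X] unfolding percolating_def by blast
  moreover have "S \<subseteq> V - X" using S SX unfolding percolating_def by blast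
  ultimately have "x \<in> V - X" using infected_subset few by blast
  then show False using x by blast
qed

lemma card_units_le_percolating:
  assumes S: "percolating V E 2 S"
  shows "card units \<le> card S"
proof -
  have fin: "finite S" using S finite_V finite_subset unfolding percolating_def by blast
  define pick where "pick X = (SOME s. s \<in> S \<inter> X)" for X
  have pick: "pick X \<in> S \<inter> X" if "X \<in> units" for X
    unfolding pick_def by (rule someI_ex) (use unit_meets_percolating[OF S that] in blast)
  have "inj_on pick units"
  proof (rule inj_onI)
    fix X Y assume XY: "X \<in> units" "Y \<in> units" "pick X = pick Y"
    then have "pick X \<in> X \<inter> Y" using pick[OF XY(1)] pick[OF XY(2)] by simp
    then show "X = Y" using units_disjoint[OF XY(1,2)] by blast
  qed
  moreover have "pick ` units \<subseteq> S" using pick by blast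
  ultimately show ?thesis using card_inj_on_le fin by blast
qed

lemma card_V_diamonds:
  assumes "\<And>X. X \<in> units \<Longrightarrow> induces_diamond E X"
  shows "card V = 4 * card units"
proof -
  have "pairwise disjnt units" unfolding pairwise_def disjnt_def using units_disjoint by blast
  then have "card V = (\<Sum>X\<in>units. card X)" using card_Union_disjoint finite_unit units_cover by metis
  also have "\<dots> = (\<Sum>X\<in>units. 4)" using assms unfolding induces_diamond_def by (intro sum.cong) auto
  finally show ?thesis by simp
qed

lemma nearest_in_unit:
  assumes "X \<in> units" "\<And>v. v \<in> V \<Longrightarrow> A\<^sup>*\<^sup>* q v"
  shows "nearest A q X \<in> X"
proof -
  obtain v where v: "v \<in> X" using unit_nonempty[OF assms(1)] by blast
  then have "A\<^sup>*\<^sup>* q v" using assms(2) unit_subset_V[OF assms(1)] by blast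
  then show ?thesis using nearest[OF v] by blast
qed

text \<open>Units are infected in the order of their distance from \<open>q\<close>: the vertex through which a unit
  is first reached has an infected predecessor outside the unit and an infected neighbour inside.\<close>
lemma infection_spreads:
  assumes A_E: "A \<le> E"
    and reach: "\<And>v. v \<in> V \<Longrightarrow> A\<^sup>*\<^sup>* q v"
    and W: "W \<in> units" "q \<in> W" "\<And>w. w \<in> W \<Longrightarrow> infected2 S w"
    and entry: "\<And>X v. X \<in> units \<Longrightarrow> v \<notin> X \<Longrightarrow> A v (nearest A q X) \<Longrightarrow>
      \<exists>y\<in>X. y \<noteq> nearest A q X \<and> E (nearest A q X) y \<and> infected2 S y"
    and x: "x \<in> V"
  shows "infected2 S x"
proof -
  have "\<forall>X\<in>units. set_dist A q X = n \<longrightarrow> (\<forall>z\<in>X. infected2 S z)" for n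
  proof (induction n rule: less_induct)
    case (less n)
    show ?case
    proof (intro ballI impI)
      fix X z assume X: "X \<in> units" and n: "set_dist A q X = n" and z: "z \<in> X"
      show "infected2 S z"
      proof (cases "q \<in> X")
        case True
        then show ?thesis using W units_disjoint[OF X W(1)] z by blast
      next
        case False
        let ?x = "nearest A q X"
        have x: "?x \<in> X" by (rule nearest_in_unit[OF X reach])
        then have "A\<^sup>*\<^sup>* q ?x" using reach unit_subset_V[OF X] by blast
        then obtain v k where v: "(A ^^ k) q v" "A v ?x" "v \<notin> X" "set_dist A q X = Suc k"
          by (rule nearest_predecessor[OF x _ False])
        obtain y where y: "y \<in> X" "y \<noteq> ?x" "E ?x y" "infected2 S y"
          using entry[OF X v(3) v(2)] by blast
        obtain Y where Y: "Y \<in> units" "v \<in> Y"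
          using units_cover E_in_V(1)[OF predicate2D[OF A_E v(2)]] by blast
        have "set_dist A q Y < n" using set_dist_le[OF Y(2) v(1)] v(4) n by simp
        then have "infected2 S v" using less.IH Y by blast
        moreover have "v \<noteq> y" using v(3) y(1) by blast
        ultimately have "infected2 S ?x"
          using infected2_step[of ?x v y S] E_sym[OF predicate2D[OF A_E v(2)]] y x unit_subset_V[OF X] by blast
        then show ?thesis using unit_infected[OF X x y(1) y(2)[symmetric] _ y(4) z] by blast
      qed
    qed
  qed
  then show ?thesis using x units_cover by blast
qed

definition seed :: "('a \<Rightarrow> 'a \<Rightarrow> bool) \<Rightarrow> 'a \<Rightarrow> 'a set \<Rightarrow> 'a" where
  "seed A q X = (SOME h. is_hub X h \<and> h \<noteq> nearest A q X)"

lemma seed: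
  assumes "X \<in> units"
  shows "seed A q X \<in> X" "seed A q X \<noteq> nearest A q X"
    "nearest A q X \<in> X \<Longrightarrow> E (nearest A q X) (seed A q X)"
proof -
  have "is_hub X (seed A q X) \<and> seed A q X \<noteq> nearest A q X"
    unfolding seed_def by (rule someI_ex) (use unit_hub_avoiding[OF assms] in blast)
  then show "seed A q X \<in> X" "seed A q X \<noteq> nearest A q X"
    "nearest A q X \<in> X \<Longrightarrow> E (nearest A q X) (seed A q X)"
    unfolding is_hub_def by (auto simp: E_commute)
qed

lemma seed_entry:
  assumes "X \<in> units" "\<And>v. v \<in> V \<Longrightarrow> A\<^sup>*\<^sup>* q v" "seed A q X \<in> S"
  shows "\<exists>y\<in>X. y \<noteq> nearest A q X \<and> E (nearest A q X) y \<and> infected2 S y"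
  using seed[OF assms(1)] nearest_in_unit[OF assms(1,2)] infected.init[OF assms(3)] by blast

lemma start_unit_infected:
  assumes W: "W \<in> units" "q \<in> W" and S: "infected2 S q" "seed A q W \<in> S" and w: "w \<in> W"
  shows "infected2 S w"
proof -
  have "q \<noteq> seed A q W" using seed(2)[OF W(1), of A q] nearest_self[OF W(2), of A] by simp
  then show ?thesis
    using unit_infected[OF W(1) W(2) seed(1)[OF W(1)] _ S(1) infected.init[OF S(2)] w] by blast
qed

lemma percolating_card_le_Suc_units:
  assumes "V \<noteq> {}"
  shows "\<exists>S. percolating V E 2 S \<and> card S \<le> card units + 1"
proof -
  obtain q where q: "q \<in> V" using assms by blast
  obtain W where W: "W \<in> units" "q \<in> W" using q units_cover by blast
  have reach: "E\<^sup>*\<^sup>* q v" if "v \<in> V" for v using connected q that unfolding graph_connected_def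
    by blast
  define S where "S = insert q (seed E q ` units)"
  have seeds: "seed E q X \<in> S" if "X \<in> units" for X using that unfolding S_def by blast
  have "infected2 S q" unfolding S_def by (simp add: infected.init)
  then have W_infected: "infected2 S w" if "w \<in> W" for w
    using start_unit_infected[OF W _ seeds[OF W(1)] that] by blast
  have entry: "\<exists>y\<in>X. y \<noteq> nearest E q X \<and> E (nearest E q X) y \<and> infected2 S y"
    if "X \<in> units" for X
    using seed_entry[OF that reach seeds[OF that]] .
  have "seed E q X \<in> V" if "X \<in> units" for X
    using seed(1)[OF that] unit_subset_V[OF that] by blast
  then have "S \<subseteq> V" unfolding S_def using q by blast
  moreover have "infected2 S x" if "x \<in> V" for x
    by (rule infection_spreads[of E q W S]) (use reach W W_infected entry that in blast)+
  moreover have "card S \<le> card units + 1" unfolding S_def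
    by (rule card_insert_image_le[OF finite_units])
  ultimately show ?thesis unfolding percolating_def by blast
qed

definition reach_without :: "'a \<Rightarrow> 'a \<Rightarrow> 'a set" where
  "reach_without p q = {v. (delete_edge E p q)\<^sup>*\<^sup>* q v}"

lemma reach_without_start: "q \<in> reach_without p q"
  unfolding reach_without_def by simp

lemma reach_without_step: "v \<in> reach_without p q \<Longrightarrow> delete_edge E p q v w \<Longrightarrow> w \<in> reach_without p q"
  unfolding reach_without_def by (simp add: rtranclp.rtrancl_into_rtrancl)

lemma reach_without_subset_V: "E p q \<Longrightarrow> reach_without p q \<subseteq> V"
proof
  fix v assume pq: "E p q" and "v \<in> reach_without p q"
  then have "(delete_edge E p q)\<^sup>*\<^sup>* q v" unfolding reach_without_def by simp
  then show "v \<in> V"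
  proof (induction rule: rtranclp_induct)
    case base
    then show ?case using E_in_V(2)[OF pq] .
  next
    case (step b c)
    then show ?case using E_in_V(2) unfolding delete_edge_def by blast
  qed
qed

lemma reach_without_all:
  assumes "E p q" "p \<in> reach_without p q"
  shows "V \<subseteq> reach_without p q"
proof (rule connected_closed_set[OF E_in_V(2)[OF assms(1)] reach_without_start])
  fix u v assume "u \<in> reach_without p q" "E u v"
  then show "v \<in> reach_without p q"
    using assms(2) reach_without_start reach_without_step unfolding delete_edge_def
    by (cases "{u, v} = {p, q}") (auto simp: doubleton_eq_iff)
qed

lemma reach_without_avoiding:
  assumes "u \<notin> reach_without x x'" "v \<in> reach_without x x'"
  shows "(delete_edge E u w)\<^sup>*\<^sup>* x' v"
proof -
  have "(delete_edge E x x')\<^sup>*\<^sup>* x' v" using assms(2) unfolding reach_without_def by simp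
  then show ?thesis
  proof (induction rule: rtranclp_induct)
    case (step b c)
    then have "b \<in> reach_without x x'" "c \<in> reach_without x x'"
      unfolding reach_without_def by (auto intro: rtranclp.rtrancl_into_rtrancl)
    then have "delete_edge E u w b c"
      using step(2) assms(1) unfolding delete_edge_def by (auto simp: doubleton_eq_iff)
    then show ?case by (rule rtranclp.rtrancl_into_rtrancl[OF step(3)])
  qed simp
qed

definition triangle_exit :: "'a set \<Rightarrow> 'a \<Rightarrow> 'a \<Rightarrow> bool" where
  "triangle_exit U p q \<longleftrightarrow> U \<in> units \<and> induces_triangle E U \<and> p \<in> U \<and> E p q \<and> q \<notin> U"

lemma triangle_exit_exists:
  assumes "U \<in> units" "induces_triangle E U" "p \<in> U"
  obtains q where "triangle_exit U p q"
proof -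
  obtain x y where U: "U = {p, x, y}" "triangle E p x y"
    by (rule induces_triangle_at[OF assms(2,3)])
  then have "E p x" "E p y" "x \<noteq> y" unfolding triangle_def by auto
  then obtain q where q: "E p q" "q \<noteq> x" "q \<noteq> y" by (rule third_nbr)
  then have "q \<notin> U" using U(1) E_neq by auto
  then show thesis using that q(1) assms unfolding triangle_exit_def by blast
qed

lemma triangle_exit_entry:
  assumes exit: "triangle_exit U p q" and x: "x \<in> U" and v: "v \<notin> U" "delete_edge E p q v x"
  shows "x \<noteq> p" "E x p"
proof -
  have U: "U \<in> units" "induces_triangle E U" "p \<in> U" "E p q" "q \<notin> U"
    using exit unfolding triangle_exit_def by auto
  show "x \<noteq> p"
  proof
    assume "x = p"
    then have "E p v" "v \<noteq> q" using v(2) E_sym unfolding delete_edge_def by auto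
    then show False using outside_nbr_unique[OF U(1,3) _ v(1) U(4,5)] by blast
  qed
  then show "E x p" using U(2,3) x unfolding induces_triangle_def by blast
qed

lemma percolating_card_le_units:
  assumes exit: "triangle_exit U p q" and cycle: "p \<in> reach_without p q"
  shows "\<exists>S. percolating V E 2 S \<and> card S \<le> card units"
proof -
  let ?A = "delete_edge E p q"
  have U: "U \<in> units" "p \<in> U" "E p q" "q \<notin> U" using exit unfolding triangle_exit_def by auto
  have q: "q \<in> V" using E_in_V U(3) by blast
  have reach: "?A\<^sup>*\<^sup>* q v" if "v \<in> V" for v
    using reach_without_all[OF U(3) cycle] that unfolding reach_without_def by blast
  obtain W where W: "W \<in> units" "q \<in> W" using q units_cover by blast
  have "W \<noteq> U" using W(2) U(4) by blast
  then have "p \<notin> W" using units_disjoint[OF W(1) U(1)] U(2) by blast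
  define S where "S = insert p (seed ?A q ` (units - {U}))"
  have seeds: "seed ?A q X \<in> S" if "X \<in> units" "X \<noteq> U" for X using that unfolding S_def by blast
  have p: "infected2 S p" unfolding S_def by (simp add: infected.init)
  have "nearest ?A q W = q" using W(2) by (rule nearest_self)
  then have "E q (seed ?A q W)" "p \<noteq> seed ?A q W" using seed[OF W(1), of ?A q] W(2) \<open>p \<notin> W\<close> by auto
  then have "infected2 S q"
    using infected2_step[OF q E_sym[OF U(3)]] p infected.init[OF seeds[OF W(1) \<open>W \<noteq> U\<close>]] by blast
  then have W_infected: "infected2 S w" if "w \<in> W" for w
    using start_unit_infected[OF W _ seeds[OF W(1) \<open>W \<noteq> U\<close>] that] by blast
  have entry: "\<exists>y\<in>X. y \<noteq> nearest ?A q X \<and> E (nearest ?A q X) y \<and> infected2 S y"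
    if X: "X \<in> units" "v \<notin> X" "?A v (nearest ?A q X)" for X v
  proof (cases "X = U")
    case True
    then show ?thesis
      using triangle_exit_entry[OF exit _ X(2,3)[unfolded True]] nearest_in_unit[OF U(1) reach] U(2) p
      by (intro bexI[of _ p]) auto
  next
    case False
    then show ?thesis using seed_entry[OF X(1) reach seeds[OF X(1)]] by blast
  qed
  have "seed ?A q X \<in> V" if "X \<in> units" for X
    using seed(1)[OF that] unit_subset_V[OF that] by blast
  then have "S \<subseteq> V" unfolding S_def using U(1,2) unit_subset_V by blast
  moreover have "infected2 S x" if "x \<in> V" for x
    by (rule infection_spreads[of ?A q W S])
      (use reach W W_infected entry that in \<open>auto simp: delete_edge_def\<close>)
  moreover have "card S \<le> card units"
    unfolding S_def by (rule card_insert_image_remove_le[OF finite_units U(1)])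
  ultimately show ?thesis unfolding percolating_def by blast
qed

section \<open>Exits of triangle units\<close>

lemma symp_delete_edge: "symp (delete_edge E p q)"
  unfolding symp_def delete_edge_def by (auto simp: E_commute insert_commute)

lemma bridge_side_closed:
  assumes "p \<notin> reach_without p q" "v \<in> reach_without p q" "E v w" "\<not> (v = q \<and> w = p)"
  shows "w \<in> reach_without p q"
proof -
  have "v \<noteq> p" using assms(1,2) by blast
  then have "delete_edge E p q v w" using assms(3,4) unfolding delete_edge_def
    by (auto simp: doubleton_eq_iff)
  then show ?thesis using reach_without_step assms(2) by blast
qed

lemma bridge_side_units:
  assumes exit: "triangle_exit U p q" and bridge: "p \<notin> reach_without p q"
    and X: "X \<in> units" and v: "v \<in> X" "v \<in> reach_without p q"
  shows "X \<subseteq> reach_without p q"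
proof -
  let ?C = "reach_without p q"
  have inside: "w \<in> ?C" if "u \<in> X" "u \<in> ?C" "w \<in> X" "E u w" for u w
  proof (rule bridge_side_closed[OF bridge that(2,4)])
    show "\<not> (u = q \<and> w = p)"
      using units_disjoint[OF X] that(1,3) exit unfolding triangle_exit_def by blast
  qed
  obtain h where h: "is_hub X h" "h \<noteq> v" using unit_hub_avoiding[OF X] by blast
  then have "E h v" using v(1) unfolding is_hub_def by auto
  then have "h \<in> ?C" using inside[OF v _ E_sym] h(1) unfolding is_hub_def by blast
  show ?thesis
  proof
    fix w assume "w \<in> X"
    then show "w \<in> ?C" using inside[of h w] \<open>h \<in> ?C\<close> h(1) unfolding is_hub_def
      by (cases "w = h") auto
  qed
qed

lemma bridge_side_odd:
  assumes exit: "triangle_exit U p q" and bridge: "p \<notin> reach_without p q"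
  shows "odd (card (reach_without p q))"
proof -
  let ?C = "reach_without p q"
  have pq: "E p q" using exit unfolding triangle_exit_def by blast
  have CV: "?C \<subseteq> V" using reach_without_subset_V[OF pq] .
  have fin: "finite ?C" using CV finite_V finite_subset by blast
  have q: "q \<in> ?C" by (rule reach_without_start)
  have deg: "card (nbrs v \<inter> ?C) = (if v = q then 2 else 3)" if v: "v \<in> ?C" for v
  proof -
    have "nbrs v \<inter> ?C = nbrs v - (if v = q then {p} else {})"
      using bridge_side_closed[OF bridge v] bridge by auto
    moreover have "v = q \<Longrightarrow> p \<in> nbrs v" using E_sym[OF pq] by simp
    ultimately show ?thesis using card_nbrs CV v finite_nbrs by (auto simp: card_Diff_singleton)
  qed
  have "inner_degree_sum ?C = (\<Sum>v\<in>?C. if v = q then 2 else 3)"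
    unfolding inner_degree_sum_def using deg by (rule sum.cong[OF refl])
  also have "\<dots> = 2 + 3 * (card ?C - 1)"
    using sum.remove[OF fin q, of "\<lambda>v. if v = q then 2 else 3 :: nat"] fin q
    by (simp add: card_Diff_singleton)
  finally have "3 * card ?C = inner_degree_sum ?C + 1"
    using fin q card_gt_0_iff[of ?C] by (cases "card ?C") auto
  then have "odd (3 * card ?C)" using even_inner_degree_sum[OF fin] by simp
  then show ?thesis by simp
qed

text \<open>The side of a bridge has odd order, so it is not a union of diamonds.\<close>
lemma bridge_side_triangle:
  assumes exit: "triangle_exit U p q" and bridge: "p \<notin> reach_without p q"
  shows "\<exists>T\<in>units. induces_triangle E T \<and> T \<subseteq> reach_without p q"
proof (rule ccontr)
  let ?C = "reach_without p q"
  assume "\<not> ?thesis"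
  then have dia: "induces_diamond E X" if "X \<in> units" "X \<subseteq> ?C" for X
    using that unit_cases by blast
  define K where "K = {X \<in> units. X \<subseteq> ?C}"
  have "\<Union>K = ?C"
  proof
    show "?C \<subseteq> \<Union>K"
    proof
      fix v assume v: "v \<in> ?C"
      then have "v \<in> V" using reach_without_subset_V exit unfolding triangle_exit_def by blast
      then obtain X where "X \<in> units" "v \<in> X" using units_cover by blast
      then show "v \<in> \<Union>K" using bridge_side_units[OF exit bridge] v unfolding K_def by blast
    qed
  qed (auto simp: K_def)
  moreover have "pairwise disjnt K" unfolding K_def pairwise_def disjnt_def using units_disjoint
    by blast
  moreover have "\<forall>X\<in>K. finite X" unfolding K_def using finite_unit by blast
  ultimately have "card ?C = (\<Sum>X\<in>K. card X)" by (metis card_Union_disjoint)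
  also have "\<dots> = (\<Sum>X\<in>K. 4)"
    using dia unfolding K_def induces_diamond_def by (intro sum.cong) auto
  finally have "card ?C = 4 * card K" by simp
  then show False using bridge_side_odd[OF exit bridge] by simp
qed

lemma bridge_side_shrinks:
  assumes exit: "triangle_exit U p q" and bridge: "p \<notin> reach_without p q"
    and exit': "triangle_exit T x x'" and bridge': "x \<notin> reach_without x x'"
    and T: "T \<subseteq> reach_without p q" and p: "p \<notin> reach_without x x'"
  shows "card (reach_without x x') < card (reach_without p q)"
proof -
  let ?C = "reach_without p q" and ?R = "reach_without x x'"
  have x: "x \<in> T" "E x x'" using exit' unfolding triangle_exit_def by auto
  have "x' \<noteq> p" using p reach_without_start by blast
  then have "x' \<in> ?C" using bridge_side_closed[OF bridge _ x(2)] T x(1) by blast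
  have "?R \<subseteq> ?C"
  proof
    fix v assume "v \<in> ?R"
    then have "(delete_edge E p q)\<^sup>*\<^sup>* x' v" using reach_without_avoiding[OF p] by blast
    moreover have "(delete_edge E p q)\<^sup>*\<^sup>* q x'" using \<open>x' \<in> ?C\<close> unfolding reach_without_def by simp
    ultimately show "v \<in> ?C" unfolding reach_without_def by simp
  qed
  moreover have "x \<in> ?C - ?R" using T x(1) bridge' by blast
  moreover have "finite ?C"
    using reach_without_subset_V exit finite_V finite_subset unfolding triangle_exit_def by metis
  ultimately show ?thesis by (metis Diff_iff psubsetI psubset_card_mono)
qed

text \<open>Walking around the triangle turns a path avoiding both bridges into a cycle through one of them.\<close>
lemma bridges_of_triangle:
  assumes T: "triangle_exit T a a'" "triangle_exit T b b'" "a \<noteq> b"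
    and bridges: "a \<notin> reach_without a a'" "b \<notin> reach_without b b'"
    and v: "v \<in> reach_without a a'" "v \<in> reach_without b b'"
  shows False
proof -
  have ab: "E a b" "E b a" "a' \<notin> T" "b' \<notin> T" "a \<in> T" "b \<in> T" "E b b'"
    using T unfolding triangle_exit_def induces_triangle_def by auto
  have "a \<notin> reach_without b b'"
  proof
    assume "a \<in> reach_without b b'"
    moreover have "delete_edge E b b' a b" using ab unfolding delete_edge_def
      by (auto simp: doubleton_eq_iff)
    ultimately show False using reach_without_step bridges(2) by blast
  qed
  then have "(delete_edge E a a')\<^sup>*\<^sup>* b' v" using reach_without_avoiding v(2) by blast
  then have "(delete_edge E a a')\<^sup>*\<^sup>* v b'" by (rule sympD[OF symp_rtranclp[OF symp_delete_edge]])
  moreover have "delete_edge E a a' b' b" "delete_edge E a a' b a"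
    using ab E_sym[OF ab(7)] unfolding delete_edge_def by (auto simp: doubleton_eq_iff)
  ultimately have "(delete_edge E a a')\<^sup>*\<^sup>* v a"
    using rtranclp.rtrancl_into_rtrancl by metis
  moreover have "(delete_edge E a a')\<^sup>*\<^sup>* a' v" using v(1) unfolding reach_without_def by simp
  ultimately have "a \<in> reach_without a a'" unfolding reach_without_def by simp
  then show False using bridges(1) by blast
qed

text \<open>Take a bridging exit whose far side is smallest; that side contains a triangle unit, whose
  two exits cannot both reach back to its near end.\<close>
lemma exists_cycle_exit:
  assumes "U \<in> units" "induces_triangle E U"
  shows "\<exists>U p q. triangle_exit U p q \<and> p \<in> reach_without p q"
proof (rule ccontr)
  assume "\<not> ?thesis"
  then have bridge: "p \<notin> reach_without p q" if "triangle_exit U p q" for U p q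
    using that by blast
  have "\<not> (triangle_exit U p q \<and> card (reach_without p q) = n)" for U p q n
  proof (induction n arbitrary: U p q rule: less_induct)
    case (less n)
    show ?case
    proof
      assume "triangle_exit U p q \<and> card (reach_without p q) = n"
      then have exit: "triangle_exit U p q" and n: "card (reach_without p q) = n" by auto
      obtain T where T: "T \<in> units" "induces_triangle E T" "T \<subseteq> reach_without p q"
        using bridge_side_triangle[OF exit bridge[OF exit]] by blast
      obtain a b c where "T = {a, b, c}" "triangle E a b c" using T(2)
        unfolding induces_triangle_iff by blast
      then have ab: "a \<in> T" "b \<in> T" "a \<noteq> b" unfolding triangle_def by auto
      obtain a' b' where a': "triangle_exit T a a'" and b': "triangle_exit T b b'"
        using triangle_exit_exists[OF T(1,2)] ab by metis
      have "p \<in> reach_without x x'" if x: "triangle_exit T x x'" for x x'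
      proof (rule ccontr)
        assume "p \<notin> reach_without x x'"
        then have "card (reach_without x x') < n"
          using bridge_side_shrinks[OF exit bridge[OF exit] x bridge[OF x] T(3)] n by blast
        then show False using less.IH x by blast
      qed
      then show False using bridges_of_triangle[OF a' b' ab(3) bridge[OF a'] bridge[OF b']] a' b'
        by blast
    qed
  qed
  moreover obtain p where "p \<in> U" using assms(1) unit_nonempty by blast
  then obtain q where "triangle_exit U p q" using triangle_exit_exists[OF assms] by blast
  ultimately show False by blast
qed

lemma m_perc_with_triangle:
  assumes "U \<in> units" "induces_triangle E U"
  shows "m_perc V E 2 = card units"
proof -
  obtain U p q where exit: "triangle_exit U p q" and cycle: "p \<in> reach_without p q"
    using exists_cycle_exit[OF assms] by blast
  obtain S where "percolating V E 2 S" "card S \<le> card units"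
    using percolating_card_le_units[OF exit cycle] by blast
  then show ?thesis using m_perc_eqI card_units_le_percolating by blast
qed

lemma m_perc_diamonds:
  assumes "\<And>X. X \<in> units \<Longrightarrow> induces_diamond E X" "V \<noteq> {}"
  shows "m_perc V E 2 = card units + 1"
proof -
  have "card units + 1 \<le> card S" if "percolating V E 2 S" for S
    using percolating_card_lower[OF that assms(2)] card_V_diamonds[OF assms(1)] by linarith
  moreover obtain S where "percolating V E 2 S" "card S \<le> card units + 1"
    using percolating_card_le_Suc_units[OF assms(2)] by blast
  ultimately show ?thesis using m_perc_eqI by blast
qed

section \<open>Diamond necklaces\<close>

lemma units_diamonds_if_covered:
  assumes cover: "\<And>v. v \<in> V \<Longrightarrow> \<exists>D. induces_diamond E D \<and> v \<in> D" and X: "X \<in> units"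
  shows "induces_diamond E X"
proof (rule ccontr)
  assume "\<not> induces_diamond E X"
  then have "X \<inter> D = {}" if "induces_diamond E D" for D using X that unfolding units_def by blast
  moreover obtain v where "v \<in> X" using unit_nonempty[OF X] by blast
  ultimately show False using cover unit_subset_V[OF X] by blast
qed

lemma necklace_units_diamonds:
  assumes "is_diamond_necklace V E" "X \<in> units"
  shows "induces_diamond E X"
proof (rule units_diamonds_if_covered[OF _ assms(2)])
  fix v assume v: "v \<in> V"
  obtain k where k: "2 \<le> k" and iso: "graph_iso (necklace_V k) (necklace_E k) V E"
    using assms(1) graph_iso_sym unfolding is_diamond_necklace_def by blast
  then obtain g where g: "bij_betw g (necklace_V k) V"
    "\<forall>x\<in>necklace_V k. \<forall>y\<in>necklace_V k. necklace_E k x y \<longleftrightarrow> E (g x) (g y)"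
    unfolding graph_iso_def by blast
  obtain i j where ij: "v = g (i, j)" "i < k" "j < 4"
    using v g(1) unfolding necklace_V_def bij_betw_def by auto
  let ?D = "{g (i, 0), g (i, 1), g (i, 2), g (i, 3)}"
  have "{(i, 0), (i, 1), (i, 2), (i, 3)} \<subseteq> necklace_V k" using ij(2) unfolding necklace_V_def
    by auto
  then have "induces_diamond E ?D"
    using graph_iso_diamond[OF g _ necklace_diamond[OF k ij(2)]] unfolding induces_diamond_iff
      by blast
  moreover have "v \<in> ?D" using ij by (auto simp: less_Suc_eq numeral_eq_Suc)
  ultimately show "\<exists>D. induces_diamond E D \<and> v \<in> D" by blast
qed

end

locale diamond_graph = claw_free_cubic_graph +
  assumes all_diamonds: "X \<in> units \<Longrightarrow> induces_diamond E X"
    and nonempty: "V \<noteq> {}"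
begin

definition is_end :: "'a \<Rightarrow> bool" where
  "is_end x \<longleftrightarrow> x \<in> V \<and> \<not> nbrs x \<subseteq> unit_of x"

definition out_nbr :: "'a \<Rightarrow> 'a" where
  "out_nbr x = (SOME w. E x w \<and> w \<notin> unit_of x)"

definition other_end :: "'a \<Rightarrow> 'a" where
  "other_end x = (SOME y. y \<in> unit_of x \<and> y \<noteq> x \<and> is_end y)"

definition next_end :: "'a \<Rightarrow> 'a" where
  "next_end x = other_end (out_nbr x)"

lemma ends_of_diamond_unit:
  assumes X: "X \<in> units" "X = {a, b, c, d}" and D: "diamond E a b c d"
  shows "{x \<in> X. is_end x} = {a, b}"
proof -
  have u: "unit_of v = X" if "v \<in> X" for v using unit_of_eq X(1) that by blast
  have hub: "\<not> is_end c" if D: "diamond E a b c d" "X = {a, b, c, d}" for a b c d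
    using nbrs_diamond_hub[OF D(1)] u D(2) unfolding is_end_def by auto
  have tip: "is_end a" if D: "diamond E a b c d" "X = {a, b, c, d}" for a b c d
  proof -
    have "E a c" "E a d" "c \<noteq> d" "\<not> E a b" using D(1) unfolding diamond_def by auto
    obtain w where w: "E a w" "w \<noteq> c" "w \<noteq> d" by (rule third_nbr[OF \<open>E a c\<close> \<open>E a d\<close> \<open>c \<noteq> d\<close>])
    then have "w \<notin> X" using D(2) E_neq \<open>\<not> E a b\<close> by auto
    then show ?thesis using w(1) u D(2) E_in_V(1) unfolding is_end_def by auto
  qed
  have "X = {b, a, c, d}" "X = {a, b, d, c}" using X(2) by auto
  then show ?thesis
    using hub[OF D X(2)] hub[OF diamond_sym(2)[OF D]] tip[OF D X(2)] tip[OF diamond_sym(1)[OF D]] X(2)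
    by auto
qed

lemma end_in_diamond:
  assumes "is_end x"
  obtains y c d where "unit_of x = {x, y, c, d}" "diamond E x y c d"
proof -
  have x: "unit_of x \<in> units" "x \<in> unit_of x" using unit_of assms unfolding is_end_def by auto
  obtain a b c d where X: "unit_of x = {a, b, c, d}" "diamond E a b c d"
    using all_diamonds[OF x(1)] unfolding induces_diamond_iff by blast
  then have "x = a \<or> x = b" using ends_of_diamond_unit[OF x(1) X] x(2) assms by blast
  then show thesis
  proof
    assume "x = a"
    then show thesis using that X by blast
  next
    assume "x = b"
    moreover have "unit_of x = {b, a, c, d}" using X(1) by auto
    ultimately show thesis using that diamond_sym(1)[OF X(2)] by blast
  qed
qed

lemma other_end_unit:
  assumes "is_end x"
  obtains c d where "unit_of x = {x, other_end x, c, d}" "diamond E x (other_end x) c d"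
proof -
  obtain y c d where X: "unit_of x = {x, y, c, d}" "diamond E x y c d"
    by (rule end_in_diamond[OF assms])
  have "unit_of x \<in> units" using unit_of assms unfolding is_end_def by blast
  then have ends: "{v \<in> unit_of x. is_end v} = {x, y}" using ends_of_diamond_unit X by blast
  have "y \<in> unit_of x \<and> y \<noteq> x \<and> is_end y" using ends X(2) unfolding diamond_def by auto
  then have "other_end x \<in> unit_of x \<and> other_end x \<noteq> x \<and> is_end (other_end x)"
    unfolding other_end_def by (rule someI)
  then have "other_end x = y" using ends by blast
  then show thesis using that X by blast
qed

lemma other_end:
  assumes x: "is_end x"
  shows "other_end x \<in> unit_of x" "other_end x \<noteq> x" "\<not> E x (other_end x)"
    "is_end (other_end x)" "unit_of (other_end x) = unit_of x" "other_end (other_end x) = x"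
    "v \<in> unit_of x \<Longrightarrow> is_end v \<Longrightarrow> v = x \<or> v = other_end x"
proof -
  obtain c d where X: "unit_of x = {x, other_end x, c, d}" "diamond E x (other_end x) c d"
    by (rule other_end_unit[OF x])
  have U: "unit_of x \<in> units" using unit_of x unfolding is_end_def by blast
  have ends: "{v \<in> unit_of x. is_end v} = {x, other_end x}" using ends_of_diamond_unit[OF U X] .
  show "other_end x \<in> unit_of x" "other_end x \<noteq> x" "\<not> E x (other_end x)"
    using X unfolding diamond_def by auto
  show y: "is_end (other_end x)" using ends by blast
  show u: "unit_of (other_end x) = unit_of x" using unit_of_eq[OF U] X(1) by simp
  show "v \<in> unit_of x \<Longrightarrow> is_end v \<Longrightarrow> v = x \<or> v = other_end x" using ends by blast
  obtain c' d' where Y: "unit_of x = {other_end x, other_end (other_end x), c', d'}"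
    "diamond E (other_end x) (other_end (other_end x)) c' d'"
    using other_end_unit[OF y] u by metis
  then have "other_end (other_end x) \<in> {x, other_end x}" "other_end (other_end x) \<noteq> other_end x"
    using ends_of_diamond_unit[OF U Y(1,2)] ends unfolding diamond_def by auto
  then show "other_end (other_end x) = x" by blast
qed

lemma out_nbr_eq:
  assumes x: "is_end x" and w: "E x w" "w \<notin> unit_of x"
  shows "out_nbr x = w"
proof -
  have U: "unit_of x \<in> units" "x \<in> unit_of x" using unit_of x unfolding is_end_def by auto
  have "E x (out_nbr x) \<and> out_nbr x \<notin> unit_of x" unfolding out_nbr_def
    by (rule someI) (use w in blast)
  then show ?thesis using outside_nbr_unique[OF U] w by blast
qed

lemma out_nbr:
  assumes x: "is_end x"
  shows "E x (out_nbr x)" "out_nbr x \<notin> unit_of x" "is_end (out_nbr x)" "out_nbr (out_nbr x) = x"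
proof -
  have "\<exists>w. E x w \<and> w \<notin> unit_of x" using x unfolding is_end_def by blast
  then have w: "E x (out_nbr x) \<and> out_nbr x \<notin> unit_of x" unfolding out_nbr_def by (rule someI_ex)
  then show "E x (out_nbr x)" "out_nbr x \<notin> unit_of x" by auto
  let ?w = "out_nbr x"
  have wV: "?w \<in> V" using E_in_V(2) w by blast
  have W: "unit_of ?w \<in> units" "?w \<in> unit_of ?w" using unit_of[OF wV] by auto
  have "x \<notin> unit_of ?w"
  proof
    assume "x \<in> unit_of ?w"
    then have "unit_of x = unit_of ?w" using unit_of_eq[OF W(1)] by blast
    then show False using W(2) w by simp
  qed
  moreover have "E ?w x" using E_sym w by blast
  ultimately show w_end: "is_end ?w" unfolding is_end_def using wV by blast
  show "out_nbr ?w = x" by (rule out_nbr_eq[OF w_end \<open>E ?w x\<close> \<open>x \<notin> unit_of ?w\<close>])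
qed

lemma next_end: "is_end x \<Longrightarrow> is_end (next_end x)"
  unfolding next_end_def using out_nbr(3) other_end(4) by blast

lemma next_end_inj: "is_end x \<Longrightarrow> is_end y \<Longrightarrow> next_end x = next_end y \<Longrightarrow> x = y"
  unfolding next_end_def using out_nbr(3,4) other_end(6) by metis

lemma funpow_next_end: "is_end x \<Longrightarrow> is_end ((next_end ^^ n) x)"
  by (induction n) (auto intro: next_end)

lemma funpow_next_end_inj:
  "is_end x \<Longrightarrow> is_end y \<Longrightarrow> (next_end ^^ n) x = (next_end ^^ n) y \<Longrightarrow> x = y"
proof (induction n)
  case (Suc n)
  then show ?case using next_end_inj[OF funpow_next_end funpow_next_end] by simp
qed simp

text \<open>Conjugating \<open>next_end\<close> by the involution \<open>other_end\<close> inverts it.\<close>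
lemma funpow_next_end_other_end:
  "is_end y \<Longrightarrow> (next_end ^^ k) (other_end ((next_end ^^ k) y)) = other_end y"
proof (induction k arbitrary: y)
  case (Suc k)
  have "other_end (other_end (out_nbr y)) = out_nbr y"
    by (rule other_end(6)[OF out_nbr(3)[OF Suc.prems]])
  then have "next_end (other_end (next_end y)) = other_end y"
    unfolding next_end_def using out_nbr(4)[OF Suc.prems] by simp
  moreover have "(next_end ^^ Suc k) y = (next_end ^^ k) (next_end y)" by (simp add: funpow_swap1)
  ultimately show ?case using Suc.IH[OF next_end[OF Suc.prems]] by simp
qed simp

text \<open>Walking from an end along \<open>next_end\<close> never reaches the other end of its own diamond:
  halfway, one would meet an end that is its own other end or its own outer neighbour.\<close>
lemma funpow_next_end_neq_other_end:
  assumes x: "is_end x"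
  shows "(next_end ^^ m) x \<noteq> other_end x"
proof
  assume eq: "(next_end ^^ m) x = other_end x"
  define k where "k = m div 2"
  define r where "r = m mod 2"
  let ?y = "(next_end ^^ k) x"
  have y: "is_end ?y" using funpow_next_end[OF x] .
  have km: "k + r + k = m" using div_mult_mod_eq[of m 2] unfolding k_def r_def by linarith
  have "(next_end ^^ k) (other_end ?y) = other_end x" by (rule funpow_next_end_other_end[OF x])
  also have "\<dots> = (next_end ^^ (k + r + k)) x" using eq km by simp
  also have "\<dots> = (next_end ^^ k) ((next_end ^^ r) ?y)" by (simp add: funpow_add)
  finally have "other_end ?y = (next_end ^^ r) ?y"
    using funpow_next_end_inj other_end(4)[OF y] funpow_next_end[OF y] by blast
  moreover have "r = 0 \<or> r = 1" unfolding r_def by auto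
  ultimately have "other_end ?y = ?y \<or> other_end ?y = other_end (out_nbr ?y)"
    unfolding next_end_def by auto
  then have "other_end (other_end ?y) = other_end (other_end (out_nbr ?y))"
    using other_end(2)[OF y] by auto
  then have "?y = out_nbr ?y" using other_end(6)[OF y] other_end(6)[OF out_nbr(3)[OF y]] by simp
  then show False using out_nbr(1)[OF y] by simp
qed

lemma end_exists: "\<exists>x. is_end x"
proof -
  obtain v where "v \<in> V" using nonempty by blast
  then have X: "unit_of v \<in> units" using unit_of by blast
  then obtain a b c d where "unit_of v = {a, b, c, d}" "diamond E a b c d"
    using all_diamonds unfolding induces_diamond_iff by blast
  then show ?thesis using ends_of_diamond_unit[OF X] by blast
qed

definition a_vertex :: "nat \<Rightarrow> 'a" where
  "a_vertex i = (next_end ^^ i) (SOME x. is_end x)"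

definition b_vertex :: "nat \<Rightarrow> 'a" where
  "b_vertex i = other_end (a_vertex i)"

definition period :: nat where
  "period = (LEAST n. 0 < n \<and> a_vertex n = a_vertex 0)"

lemma is_end_a_vertex: "is_end (a_vertex i)"
  unfolding a_vertex_def using funpow_next_end someI_ex[OF end_exists] by blast

lemma a_vertex_add: "a_vertex (n + i) = (next_end ^^ n) (a_vertex i)"
  unfolding a_vertex_def by (simp add: funpow_add)

lemma a_vertex_eq_shift: "i \<le> j \<Longrightarrow> a_vertex i = a_vertex j \<Longrightarrow> a_vertex (j - i) = a_vertex 0"
  using a_vertex_add[of i "j - i"] a_vertex_add[of i 0] funpow_next_end_inj is_end_a_vertex by simp

lemma a_vertex_returns: "\<exists>n>0. a_vertex n = a_vertex 0"
proof -
  let ?N = "{0..card {x. is_end x}}"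
  have "finite {x. is_end x}" using finite_V unfolding is_end_def by simp
  moreover have "a_vertex ` ?N \<subseteq> {x. is_end x}" using is_end_a_vertex by blast
  ultimately have "card (a_vertex ` ?N) \<le> card {x. is_end x}" by (rule card_mono)
  then have "card (a_vertex ` ?N) < card ?N" by simp
  then have "\<not> inj_on a_vertex ?N" by (rule pigeonhole)
  then obtain i j where ij: "i \<noteq> j" "a_vertex i = a_vertex j" unfolding inj_on_def by blast
  show ?thesis
  proof (cases "i < j")
    case True
    then show ?thesis using a_vertex_eq_shift[of i j] ij(2) by (intro exI[of _ "j - i"]) simp
  next
    case False
    then show ?thesis using a_vertex_eq_shift[of j i] ij by (intro exI[of _ "i - j"]) simp
  qed
qed

lemma period: "0 < period" "a_vertex period = a_vertex 0"
  using LeastI_ex[OF a_vertex_returns] unfolding period_def by auto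

lemma period_le: "0 < n \<Longrightarrow> a_vertex n = a_vertex 0 \<Longrightarrow> period \<le> n"
  unfolding period_def by (rule Least_le) blast

lemma a_vertex_add_period: "a_vertex (i + period) = a_vertex i"
  using a_vertex_add[of i period] a_vertex_add[of i 0] period(2) by simp

lemma a_vertex_mod: "a_vertex (i mod period) = a_vertex i"
proof -
  have "a_vertex (r + k * period) = a_vertex r" for r k
  proof (induction k)
    case (Suc k)
    have "a_vertex (r + Suc k * period) = a_vertex ((r + k * period) + period)"
      by (simp add: ac_simps)
    also have "\<dots> = a_vertex r" using a_vertex_add_period Suc.IH by simp
    finally show ?case .
  qed simp
  then show ?thesis by (metis mod_div_mult_eq)
qed

lemma b_vertex_mod: "b_vertex (i mod period) = b_vertex i"
  unfolding b_vertex_def a_vertex_mod ..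

lemma a_vertex_inj:
  assumes "i < period" "j < period" "a_vertex i = a_vertex j"
  shows "i = j"
proof (rule ccontr)
  have less: False if "i < j" "j < period" "a_vertex i = a_vertex j" for i j
    using period_le[of "j - i"] a_vertex_eq_shift[of i j] that by simp
  assume "i \<noteq> j"
  then show False using less assms by (metis linorder_neqE_nat)
qed

lemma a_vertex_unit: "unit_of (a_vertex n) \<in> units" "a_vertex n \<in> unit_of (a_vertex n)"
  using unit_of is_end_a_vertex unfolding is_end_def by blast+

lemma b_vertex_in_unit: "b_vertex n \<in> unit_of (a_vertex n)"
  unfolding b_vertex_def using other_end(1)[OF is_end_a_vertex] .

lemma out_nbr_a_vertex: "out_nbr (a_vertex i) = b_vertex (Suc i)"
  using a_vertex_add[of 1 i] other_end(6)[OF out_nbr(3)[OF is_end_a_vertex]]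
  unfolding b_vertex_def next_end_def by simp

lemma out_nbr_b_vertex: "out_nbr (b_vertex (Suc i)) = a_vertex i"
  using out_nbr_a_vertex out_nbr(4)[OF is_end_a_vertex] by metis

lemma b_vertex_add_period: "b_vertex (i + period) = b_vertex i"
  unfolding b_vertex_def a_vertex_add_period ..

lemma ends_of_a_vertex_unit:
  "v \<in> unit_of (a_vertex i) \<Longrightarrow> is_end v \<Longrightarrow> v = a_vertex i \<or> v = b_vertex i"
  unfolding b_vertex_def using other_end(7)[OF is_end_a_vertex] .

lemma unit_of_a_vertex_inj:
  assumes "i < period" "j < period" "unit_of (a_vertex i) = unit_of (a_vertex j)"
  shows "i = j"
proof -
  have less: False if "i < j" "j < period" "unit_of (a_vertex i) = unit_of (a_vertex j)" for i j
  proof -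
    have "a_vertex j \<in> unit_of (a_vertex i)" using that(3) a_vertex_unit(2) by simp
    then have "a_vertex j = a_vertex i \<or> a_vertex j = b_vertex i"
      using ends_of_a_vertex_unit is_end_a_vertex by blast
    moreover have "a_vertex j \<noteq> a_vertex i" using a_vertex_inj[of j i] that by auto
    moreover have "a_vertex j = (next_end ^^ (j - i)) (a_vertex i)"
      using a_vertex_add[of "j - i" i] that(1) by simp
    ultimately show False
      using funpow_next_end_neq_other_end[OF is_end_a_vertex, of "j - i" i] unfolding b_vertex_def
        by simp
  qed
  show ?thesis
  proof (rule ccontr)
    assume "i \<noteq> j"
    then consider "i < j" | "j < i" by linarith
    then show False
      by cases (use less[OF _ assms(2,3)] less[OF _ assms(1) assms(3)[symmetric]] in blast)+
  qed
qed

lemma two_le_period: "2 \<le> period"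
proof (rule ccontr)
  assume "\<not> 2 \<le> period"
  then have "period = 1" using period(1) by simp
  then have "next_end (a_vertex 0) = a_vertex 0" using a_vertex_add[of 1 0] period(2) by simp
  then have "other_end (a_vertex 0) = out_nbr (a_vertex 0)"
    unfolding next_end_def using other_end(6)[OF out_nbr(3)[OF is_end_a_vertex]] by metis
  then show False using other_end(1) out_nbr(2) is_end_a_vertex by metis
qed

lemma V_eq_units: "V = (\<Union>i<period. unit_of (a_vertex i))"
proof
  let ?K = "\<Union>i<period. unit_of (a_vertex i)"
  have unit_K: "unit_of (a_vertex n) \<subseteq> ?K" for n
  proof -
    have "n mod period < period" using period(1) by simp
    then show ?thesis unfolding a_vertex_mod[of n, symmetric] by blast
  qed
  show "?K \<subseteq> V" using unit_subset_V[OF a_vertex_unit(1)] by blast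
  show "V \<subseteq> ?K"
  proof (rule connected_closed_set)
    show "a_vertex 0 \<in> V" using is_end_a_vertex unfolding is_end_def by blast
    show "a_vertex 0 \<in> ?K" using unit_K a_vertex_unit(2) by blast
  next
    fix u v assume u: "u \<in> ?K" and uv: "E u v"
    then obtain i where i: "u \<in> unit_of (a_vertex i)" by blast
    have U: "unit_of u = unit_of (a_vertex i)" by (rule unit_of_eq[OF a_vertex_unit(1) i])
    show "v \<in> ?K"
    proof (cases "v \<in> unit_of u")
      case True
      then show ?thesis using U unit_K by blast
    next
      case False
      have "u \<in> V" using E_in_V(1)[OF uv] .
      then have "is_end u" using False uv unfolding is_end_def by blast
      then have "v = out_nbr u" using out_nbr_eq[OF _ uv False] by simp
      have "b_vertex (Suc (i + period - 1)) = b_vertex i"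
        using b_vertex_add_period period(1) by (simp add: Suc_diff_le Suc_leI)
      then have "u = a_vertex i \<or> u = b_vertex (Suc (i + period - 1))"
        using ends_of_a_vertex_unit[OF i \<open>is_end u\<close>] by simp
      then have "v = b_vertex (Suc i) \<or> v = a_vertex (i + period - 1)"
        using \<open>v = out_nbr u\<close> out_nbr_a_vertex out_nbr_b_vertex by blast
      then show ?thesis using unit_K a_vertex_unit(2) b_vertex_in_unit by blast
    qed
  qed
qed

definition hubs :: "nat \<Rightarrow> 'a \<times> 'a" where
  "hubs i = (SOME (c, d). unit_of (a_vertex i) = {a_vertex i, b_vertex i, c, d}
     \<and> diamond E (a_vertex i) (b_vertex i) c d)"

definition necklace_vertex :: "nat \<times> nat \<Rightarrow> 'a" where
  "necklace_vertex = (\<lambda>(i, j). [a_vertex i, b_vertex i, fst (hubs i), snd (hubs i)] ! j)"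

lemma necklace_vertex_simp:
  "necklace_vertex (i, j) = [a_vertex i, b_vertex i, fst (hubs i), snd (hubs i)] ! j"
  by (simp add: necklace_vertex_def)

lemma hubs:
  "unit_of (a_vertex i) = {a_vertex i, b_vertex i, fst (hubs i), snd (hubs i)}
   \<and> diamond E (a_vertex i) (b_vertex i) (fst (hubs i)) (snd (hubs i))"
proof -
  obtain c d where "unit_of (a_vertex i) = {a_vertex i, b_vertex i, c, d}"
    "diamond E (a_vertex i) (b_vertex i) c d"
    by (rule other_end_unit[OF is_end_a_vertex, of i, folded b_vertex_def])
  then have "\<exists>h. unit_of (a_vertex i) = {a_vertex i, b_vertex i, fst h, snd h}
      \<and> diamond E (a_vertex i) (b_vertex i) (fst h) (snd h)"
    by (intro exI[of _ "(c, d)"]) simp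
  then show ?thesis unfolding hubs_def case_prod_beta by (rule someI_ex)
qed

lemma unit_of_a_vertex_set:
  "unit_of (a_vertex i) = set [a_vertex i, b_vertex i, fst (hubs i), snd (hubs i)]"
  using hubs[of i] by simp

lemma necklace_vertex_in_unit: "j < 4 \<Longrightarrow> necklace_vertex (i, j) \<in> unit_of (a_vertex i)"
  unfolding unit_of_a_vertex_set necklace_vertex_simp by (rule nth_mem) simp

lemma necklace_vertex_eq_iff:
  assumes "j < 4" "j' < 4"
  shows "necklace_vertex (i, j) = necklace_vertex (i, j') \<longleftrightarrow> j = j'"
  using hubs[of i] assms unfolding necklace_vertex_simp diamond_def
    by (simp add: nth_eq_iff_index_eq)

lemma necklace_vertex_inj: "inj_on necklace_vertex (necklace_V period)"
proof (rule inj_onI)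
  fix p q assume p: "p \<in> necklace_V period" and q: "q \<in> necklace_V period"
    and eq: "necklace_vertex p = necklace_vertex q"
  obtain i j i' j' where pq: "p = (i, j)" "q = (i', j')" "i < period" "i' < period" "j < 4" "j' < 4"
    using p q unfolding necklace_V_def by auto
  have "unit_of (a_vertex i) = unit_of (a_vertex i')"
    using unit_of_eq[OF a_vertex_unit(1)] necklace_vertex_in_unit pq eq by metis
  then have "i = i'" using unit_of_a_vertex_inj pq by blast
  then show "p = q" using necklace_vertex_eq_iff pq eq by simp
qed

lemma necklace_vertex_image: "necklace_vertex ` necklace_V period = V"
proof
  show "necklace_vertex ` necklace_V period \<subseteq> V"
    using necklace_vertex_in_unit unit_subset_V[OF a_vertex_unit(1)] unfolding necklace_V_def
      by blast
  show "V \<subseteq> necklace_vertex ` necklace_V period"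
  proof
    fix v assume "v \<in> V"
    then obtain i where i: "i < period" "v \<in> unit_of (a_vertex i)" using V_eq_units by blast
    then obtain j where "j < length [a_vertex i, b_vertex i, fst (hubs i), snd (hubs i)]"
      "[a_vertex i, b_vertex i, fst (hubs i), snd (hubs i)] ! j = v"
      unfolding unit_of_a_vertex_set in_set_conv_nth by blast
    then have "j < 4" "v = necklace_vertex (i, j)" unfolding necklace_vertex_simp by auto
    then show "v \<in> necklace_vertex ` necklace_V period" using i(1) unfolding necklace_V_def by blast
  qed
qed

lemma out_nbr_necklace_vertex:
  assumes "i < period"
  shows "out_nbr (necklace_vertex (i, 0)) = necklace_vertex ((i + 1) mod period, 1)"
    "out_nbr (necklace_vertex (i, 1)) = necklace_vertex ((i + period - 1) mod period, 0)"
proof -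
  show "out_nbr (necklace_vertex (i, 0)) = necklace_vertex ((i + 1) mod period, 1)"
    unfolding necklace_vertex_simp using out_nbr_a_vertex b_vertex_mod by simp
  have "Suc (i + period - 1) = i + period" using period(1) by simp
  then have "b_vertex i = b_vertex (Suc (i + period - 1))" using b_vertex_add_period by simp
  then show "out_nbr (necklace_vertex (i, 1)) = necklace_vertex ((i + period - 1) mod period, 0)"
    unfolding necklace_vertex_simp using out_nbr_b_vertex a_vertex_mod by simp
qed

lemma necklace_vertex_cross_edge:
  assumes ij: "i < period" "i' < period" "j < 4" "j' < 4" "i \<noteq> i'"
    and e: "E (necklace_vertex (i, j)) (necklace_vertex (i', j'))"
  shows "(j = 0 \<and> j' = 1 \<and> i' = (i + 1) mod period) \<or> (j = 1 \<and> j' = 0 \<and> i = (i' + 1) mod period)"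
proof -
  let ?x = "necklace_vertex (i, j)" and ?y = "necklace_vertex (i', j')"
  have inj: "necklace_vertex (n, m) = necklace_vertex (n', m') \<Longrightarrow> n = n' \<and> m = m'"
    if "n < period" "n' < period" "m < 4" "m' < 4" for n m n' m'
    using inj_onD[OF necklace_vertex_inj] that unfolding necklace_V_def by blast
  have ux: "unit_of ?x = unit_of (a_vertex i)"
    using unit_of_eq[OF a_vertex_unit(1) necklace_vertex_in_unit[OF ij(3)]] .
  have uy: "unit_of ?y = unit_of (a_vertex i')"
    using unit_of_eq[OF a_vertex_unit(1) necklace_vertex_in_unit[OF ij(4)]] .
  have "unit_of (a_vertex i) \<noteq> unit_of (a_vertex i')" using unit_of_a_vertex_inj ij by blast
  then have "?y \<notin> unit_of ?x" using ux uy unit_of_eq[OF a_vertex_unit(1), of ?y i] by auto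
  moreover have "?x \<in> V" using E_in_V(1)[OF e] .
  ultimately have x_end: "is_end ?x" using e unfolding is_end_def by blast
  have y: "?y = out_nbr ?x" using out_nbr_eq[OF x_end e \<open>?y \<notin> unit_of ?x\<close>] by simp
  have "?x = necklace_vertex (i, 0) \<or> ?x = necklace_vertex (i, 1)"
    using ends_of_a_vertex_unit[OF necklace_vertex_in_unit[OF ij(3)] x_end]
    by (simp add: necklace_vertex_simp)
  then have "j = 0 \<or> j = 1" using necklace_vertex_eq_iff ij(3) by auto
  then show ?thesis
  proof
    assume "j = 0"
    then have "?y = necklace_vertex ((i + 1) mod period, 1)"
      using y out_nbr_necklace_vertex(1)[OF ij(1)] by simp
    moreover have "(i + 1) mod period < period" using period(1) by simp
    ultimately show ?thesis using inj[OF ij(2) _ ij(4), of "(i + 1) mod period" 1] \<open>j = 0\<close> by simp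
  next
    assume "j = 1"
    then have "?y = necklace_vertex ((i + period - 1) mod period, 0)"
      using y out_nbr_necklace_vertex(2)[OF ij(1)] by simp
    moreover have "(i + period - 1) mod period < period" using period(1) by simp
    ultimately have "i' = (i + period - 1) mod period" "j' = 0"
      using inj[OF ij(2) _ ij(4), of "(i + period - 1) mod period" 0] by simp_all
    moreover have "((i + period - 1) mod period + 1) mod period = (i + period) mod period"
      using period(1) by (simp add: mod_Suc_eq)
    moreover have "(i + period) mod period = i" using ij(1) by simp
    ultimately show ?thesis using \<open>j = 1\<close> by simp
  qed
qed

lemma necklace_vertex_adj_diff:
  assumes ij: "i < period" "i' < period" "j < 4" "j' < 4" "i \<noteq> i'"
  shows "E (necklace_vertex (i, j)) (necklace_vertex (i', j')) \<longleftrightarrow>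
    necklace_E period (i, j) (i', j')"
proof
  assume "E (necklace_vertex (i, j)) (necklace_vertex (i', j'))"
  then show "necklace_E period (i, j) (i', j')"
    using necklace_E_diff[OF ij] necklace_vertex_cross_edge[OF ij] by blast
next
  have step: "E (necklace_vertex (n, 0)) (necklace_vertex ((n + 1) mod period, 1))" if "n < period" for n
    using out_nbr_necklace_vertex(1)[OF that] out_nbr(1)[OF is_end_a_vertex, of n]
    by (simp add: necklace_vertex_simp)
  assume "necklace_E period (i, j) (i', j')"
  then consider "j = 0" "j' = 1" "i' = (i + 1) mod period" | "j = 1" "j' = 0" "i = (i' + 1) mod period"
    using necklace_E_diff[OF ij] by blast
  then show "E (necklace_vertex (i, j)) (necklace_vertex (i', j'))"
  proof cases
    case 1
    then show ?thesis using step[OF ij(1)] by simp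
  next
    case 2
    then show ?thesis using E_sym[OF step[OF ij(2)]] by simp
  qed
qed

lemma necklace_vertex_adj:
  assumes "p \<in> necklace_V period" "q \<in> necklace_V period"
  shows "necklace_E period p q \<longleftrightarrow> E (necklace_vertex p) (necklace_vertex q)"
proof -
  obtain i j i' j' where pq: "p = (i, j)" "q = (i', j')" "i < period" "i' < period" "j < 4" "j' < 4"
    using assms unfolding necklace_V_def by auto
  show ?thesis
  proof (cases "i = i'")
    case True
    then show ?thesis
      using pq necklace_E_same[OF two_le_period pq(3,5,6)] diamond_nth_adj[OF conjunct2[OF hubs] pq(5,6)]
      by (simp add: necklace_vertex_simp)
  next
    case False
    then show ?thesis using necklace_vertex_adj_diff pq by simp
  qed
qed

lemma is_diamond_necklace: "is_diamond_necklace V E"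
proof -
  have "graph_iso (necklace_V period) (necklace_E period) V E"
    unfolding graph_iso_def bij_betw_def
    using necklace_vertex_inj necklace_vertex_image necklace_vertex_adj by blast
  then show ?thesis unfolding is_diamond_necklace_def using graph_iso_sym two_le_period by blast
qed

end

context claw_free_cubic_graph
begin

theorem m_perc_eq:
  "m_perc V E 2 = (if is_diamond_necklace V E then num_units V E + 1 else num_units V E)"
proof (cases "\<exists>U\<in>units. induces_triangle E U")
  case True
  then have "\<not> is_diamond_necklace V E"
    using necklace_units_diamonds unfolding induces_triangle_def induces_diamond_def by fastforce
  then show ?thesis using True m_perc_with_triangle num_units_eq by auto
next
  case False
  then have diamonds: "\<And>X. X \<in> units \<Longrightarrow> induces_diamond E X" using unit_cases by blast
  show ?thesis
  proof (cases "V = {}")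
    case True
    then have "units = {}" using unit_subset_V unit_nonempty by blast
    moreover have "percolating V E 2 {}" using True unfolding percolating_def by simp
    moreover have "\<not> is_diamond_necklace V E" using True diamond_necklace_nonempty by blast
    ultimately show ?thesis using True m_perc_eqI[of V E 2 0] num_units_eq by simp
  next
    case False
    then have "diamond_graph V E" using diamonds by unfold_locales
    then have "is_diamond_necklace V E" by (rule diamond_graph.is_diamond_necklace)
    then show ?thesis using m_perc_diamonds[OF diamonds False] num_units_eq by simp
  qed
qed

end

theorem theorem4p4:
  fixes V :: "'a set" and E :: "'a \<Rightarrow> 'a \<Rightarrow> bool"
  assumes "simple_graph V E" and "graph_connected V E" and "claw_free V E"
    and "cubic V E" and "\<not> is_K4 V E"
  shows "m_perc V E 2 = (if is_diamond_necklace V E then num_units V E + 1 else num_units V E)"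
proof -
  interpret claw_free_cubic_graph V E
    using assms by unfold_locales
  show ?thesis by (rule m_perc_eq)
qed

end
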